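(* Fix $\gamma>0$ and let $\alpha=\gamma/(1+\gamma)$. For each $n$ let $(\Theta_n(t),t\ge0)$ be Kingman's coalescent on partitions of $\{1,\dots,n\}$, let $\Psi_n(t)=\Theta_n\big(t^{\gamma+1}/(\gamma+1)\big)$, and for $1\le k\le n$ let $U_k=\inf\{t:|\Psi_n(t)|=k\}$, where $|\pi|$ is the number of blocks of $\pi$. Let $m=\lceil n^{3/4}\rceil+1$ and $L_n'=\sum_{k=m}^{n}k\,(U_{k-1}-U_k)$. Then $$\lim_{n\to\infty}\frac{L_n'}{n^{\alpha}}=\frac{2^{1-\alpha}(1-\alpha)^{\alpha}\pi}{\sin(\pi\alpha)}\quad\text{in probability}.$$
   Context: Kingman's coalescent $(\Theta_n(t),t\ge0)$ is the continuous-time time-homogeneous Markov chain on partitions of $\{1,\dots,n\}$ with $\Theta_n(0)=\{\{1\},\dots,\{n\}\}$, in which each pair of blocks merges into one at rate $1$ and no other transitions occur. *)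

theory Defs
  imports "HOL-Probability.Probability"
begin

definition blocks_sorted :: "nat set set \<Rightarrow> nat set list" where
  "blocks_sorted \<pi> = map (\<lambda>m. THE B. B \<in> \<pi> \<and> m \<in> B) (sorted_list_of_set (Min ` \<pi>))"

definition merge_pair :: "nat set set \<Rightarrow> nat \<times> nat \<Rightarrow> nat set set" where
  "merge_pair \<pi> p = (let bs = blocks_sorted \<pi>; B1 = bs ! fst p; B2 = bs ! snd p
                      in (\<pi> - {B1, B2}) \<union> {B1 \<union> B2})"

definition block_pairs :: "nat \<Rightarrow> (nat \<times> nat) set" where
  "block_pairs k = {(i, j). i < j \<and> j < k}"

text \<open>Jump chain: state after d merges, started from the singletons of {1..n};
  the merge performed with k blocks present uses the choice v k.\<close>
fun jump_chain :: "nat \<Rightarrow> (nat \<Rightarrow> nat \<times> nat) \<Rightarrow> nat \<Rightarrow> nat set set" where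
  "jump_chain n v 0 = (\<lambda>i. {i}) ` {1..n}"
| "jump_chain n v (Suc d) = merge_pair (jump_chain n v d) (v (n - d))"

text \<open>Continuous-time path: e k is the holding time while there are k blocks;
  the jump out of state j happens at time e n + ... + e j.\<close>
definition coal_path :: "nat \<Rightarrow> (nat \<Rightarrow> real) \<Rightarrow> (nat \<Rightarrow> nat \<times> nat) \<Rightarrow> real \<Rightarrow> nat set set" where
  "coal_path n e v t = jump_chain n v (card {j \<in> {2..n}. (\<Sum>i=j..n. e i) \<le> t})"

text \<open>Kingman's coalescent on partitions of {1..n}, via the standard construction:
  independent holding times E k ~ Exp(k choose 2) (each pair of blocks merges at rate 1)
  and uniform choices V k of the pair of blocks to merge, all mutually independent
  (independence of the family with index Inl k for E k and Inr k for V k).\<close>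
definition kingman_coalescent ::
  "'w measure \<Rightarrow> nat \<Rightarrow> (real \<Rightarrow> 'w \<Rightarrow> nat set set) \<Rightarrow> bool" where
  "kingman_coalescent M n \<Theta> \<longleftrightarrow>
     (\<exists>(E :: nat \<Rightarrow> 'w \<Rightarrow> real) (V :: nat \<Rightarrow> 'w \<Rightarrow> nat \<times> nat).
        (\<forall>k\<in>{2..n}. distributed M lborel (E k)
              (\<lambda>x. ennreal (exponential_density (real (k choose 2)) x))) \<and>
        (\<forall>k\<in>{2..n}. V k \<in> measurable M (count_space UNIV) \<and>
              (\<forall>p\<in>block_pairs k. prob_space.prob M {\<omega> \<in> space M. V k \<omega> = p}
                                    = 1 / real (card (block_pairs k)))) \<and>
        prob_space.indep_vars M (\<lambda>_. borel \<Otimes>\<^sub>M count_space UNIV)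
              (\<lambda>i \<omega>. case i of Inl k \<Rightarrow> (E k \<omega>, (0, 0)) | Inr k \<Rightarrow> (0, V k \<omega>))
              (Inl ` {2..n} \<union> Inr ` {2..n}) \<and>
        (\<forall>\<omega>\<in>space M. \<forall>t\<ge>0. \<Theta> t \<omega> = coal_path n (\<lambda>k. E k \<omega>) (\<lambda>k. V k \<omega>) t))"

definition U_time :: "real \<Rightarrow> (real \<Rightarrow> 'w \<Rightarrow> nat set set) \<Rightarrow> nat \<Rightarrow> 'w \<Rightarrow> real" where
  "U_time \<gamma> \<Theta> k \<omega> =
     Inf {t. 0 \<le> t \<and> card (\<Theta> (t powr (\<gamma> + 1) / (\<gamma> + 1)) \<omega>) = k}"

definition L_prime :: "real \<Rightarrow> nat \<Rightarrow> (real \<Rightarrow> 'w \<Rightarrow> nat set set) \<Rightarrow> 'w \<Rightarrow> real" where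
  "L_prime \<gamma> n \<Theta> \<omega> =
     (let m = nat \<lceil>real n powr (3/4)\<rceil> + 1 in
      \<Sum>k=m..n. real k * (U_time \<gamma> \<Theta> (k - 1) \<omega> - U_time \<gamma> \<Theta> k \<omega>))"

end

theory Submission
  imports Defs "HOL-Real_Asymp.Real_Asymp"
begin

text \<open>With p = 1 / (\<gamma> + 1), the time change makes the hitting times explicit:
  U k = ((\<gamma> + 1) T k) powr p, where T k = E (k + 1) + ... + E n is a sum of independent
  exponential holding times with mean 2 / k - 2 / n and variance at most 4 / k^3.
  Summation by parts turns L' into m U (m - 1) + (U m + ... + U (n - 1)).
  Replacing each T j by its mean yields a Riemann sum for
  n powr (1 - p) times the integral of x powr (- p) (1 - x) powr p over [0, 1], which is
  Beta (1 - p) (1 + p) = p pi / sin (pi p) by the reflection formula; the boundary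
  term is negligible because m is of order n powr (3/4).
  For the fluctuations, the Hoelder continuity of powr p gives
  |U j - mean| \<le> (\<gamma> + 1) powr p (j powr (- 3p/2) + j powr (3 - 3p/2) (T j - ET j)^2),
  whose expectation is O(j powr (- 3p/2)); summed over j \<ge> m this is o(n powr (1 - p)),
  and Markov's inequality concludes.\<close>

section \<open>Partitions and the jump chain\<close>

definition finite_partition :: "nat set set \<Rightarrow> bool" where
  "finite_partition \<pi> \<longleftrightarrow> finite \<pi> \<and> (\<forall>B\<in>\<pi>. B \<noteq> {} \<and> finite B) \<and> pairwise disjnt \<pi>"

lemma finite_partitionD:
  assumes "finite_partition \<pi>"
  shows "finite \<pi>" "\<And>B. B \<in> \<pi> \<Longrightarrow> B \<noteq> {}" "\<And>B. B \<in> \<pi> \<Longrightarrow> finite B"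
    "\<And>B C. B \<in> \<pi> \<Longrightarrow> C \<in> \<pi> \<Longrightarrow> B \<noteq> C \<Longrightarrow> B \<inter> C = {}"
  using assms unfolding finite_partition_def pairwise_def disjnt_def by auto

lemma the_block_containing_Min:
  assumes "finite_partition \<pi>" "B \<in> \<pi>"
  shows "(THE C. C \<in> \<pi> \<and> Min B \<in> C) = B"
proof (rule the_equality)
  have Min_B: "Min B \<in> B" using finite_partitionD(2,3)[OF assms] by simp
  then show "B \<in> \<pi> \<and> Min B \<in> B" using assms(2) by simp
  fix C assume "C \<in> \<pi> \<and> Min B \<in> C"
  then show "C = B" using Min_B finite_partitionD(4)[OF assms(1) _ assms(2)] by blast
qed

lemma blocks_sorted_finite_partition:
  assumes "finite_partition \<pi>"
  shows "length (blocks_sorted \<pi>) = card \<pi>" "distinct (blocks_sorted \<pi>)" "set (blocks_sorted \<pi>) = \<pi>"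
proof -
  define g where "g = (\<lambda>m. THE B. B \<in> \<pi> \<and> m \<in> B)"
  have fin: "finite \<pi>" using finite_partitionD(1)[OF assms] .
  have bs: "blocks_sorted \<pi> = map g (sorted_list_of_set (Min ` \<pi>))"
    unfolding blocks_sorted_def g_def ..
  have g_Min: "g (Min B) = B" if "B \<in> \<pi>" for B
    unfolding g_def using the_block_containing_Min[OF assms that] .
  have inj_Min: "inj_on Min \<pi>"
    by (metis g_Min inj_onI)
  have inj_g: "inj_on g (Min ` \<pi>)"
    by (rule inj_onI) (auto simp: g_Min)
  have image: "g ` Min ` \<pi> = \<pi>"
    using g_Min by (simp add: image_image)
  show "length (blocks_sorted \<pi>) = card \<pi>"
    unfolding bs using fin inj_Min by (simp add: card_image)
  show "distinct (blocks_sorted \<pi>)"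
    unfolding bs using fin inj_g by (simp add: distinct_map)
  show "set (blocks_sorted \<pi>) = \<pi>"
    unfolding bs using fin image by simp
qed

lemma merge_pair_finite_partition:
  assumes "finite_partition \<pi>" "fst p < snd p" "snd p < card \<pi>"
  shows "finite_partition (merge_pair \<pi> p)" "card (merge_pair \<pi> p) = card \<pi> - 1"
proof -
  note bs = blocks_sorted_finite_partition[OF assms(1)]
  note part = finite_partitionD[OF assms(1)]
  define B1 where "B1 = blocks_sorted \<pi> ! fst p"
  define B2 where "B2 = blocks_sorted \<pi> ! snd p"
  have B1: "B1 \<in> \<pi>" and B2: "B2 \<in> \<pi>"
    unfolding B1_def B2_def using bs assms(2,3) by (metis less_trans nth_mem)+
  have "B1 \<noteq> B2"
    unfolding B1_def B2_def using bs assms(2,3) by (simp add: nth_eq_iff_index_eq)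
  have merge: "merge_pair \<pi> p = (\<pi> - {B1, B2}) \<union> {B1 \<union> B2}"
    unfolding merge_pair_def B1_def B2_def Let_def by simp
  have "B1 \<union> B2 \<notin> \<pi>"
  proof
    assume "B1 \<union> B2 \<in> \<pi>"
    moreover have "B1 \<union> B2 \<noteq> B1" using part(2)[OF B2] part(4)[OF B1 B2 \<open>B1 \<noteq> B2\<close>] by blast
    ultimately have "(B1 \<union> B2) \<inter> B1 = {}" using part(4)[OF _ B1] by blast
    with part(2)[OF B1] show False by blast
  qed
  then have "card (merge_pair \<pi> p) = card \<pi> - 2 + 1"
    unfolding merge using B1 B2 \<open>B1 \<noteq> B2\<close> part(1) by (simp add: card_Diff_subset)
  moreover have "card \<pi> \<ge> 2"
    using B1 B2 \<open>B1 \<noteq> B2\<close> part(1) by (metis card_2_iff card_mono empty_subsetI insert_subset)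
  ultimately show "card (merge_pair \<pi> p) = card \<pi> - 1" by simp
  have "B \<inter> C = {}" if "B \<in> \<pi>" "B \<noteq> B1" "B \<noteq> B2" "C \<in> \<pi> - {B1, B2} \<union> {B1 \<union> B2}" "B \<noteq> C" for B C
    using that part(4) B1 B2 by blast
  then show "finite_partition (merge_pair \<pi> p)"
    unfolding merge finite_partition_def pairwise_def disjnt_def
    using part B1 B2 by (auto simp: Int_commute)
qed

lemma jump_chain_finite_partition:
  assumes "\<forall>k\<in>{2..n}. v k \<in> block_pairs k" "d < n"
  shows "finite_partition (jump_chain n v d) \<and> card (jump_chain n v d) = n - d"
  using assms(2)
proof (induction d)
  case 0
  have "card ((\<lambda>i. {i}) ` {1..n}) = n" by (subst card_image) (auto simp: inj_on_def)
  then show ?case by (auto simp: finite_partition_def pairwise_def disjnt_def)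
next
  case (Suc d)
  then have IH: "finite_partition (jump_chain n v d)" "card (jump_chain n v d) = n - d" by auto
  have "v (n - d) \<in> block_pairs (n - d)" using assms(1) Suc.prems by auto
  then have "fst (v (n - d)) < snd (v (n - d))" "snd (v (n - d)) < card (jump_chain n v d)"
    using IH by (auto simp: block_pairs_def split: prod.splits)
  from merge_pair_finite_partition[OF IH(1) this] show ?case using IH(2) by simp
qed

section \<open>Hitting times of the time-changed coalescent\<close>

lemma sum_tail_antimono:
  fixes e :: "nat \<Rightarrow> real"
  assumes "\<forall>i\<in>{j..n}. 0 \<le> e i" "j \<le> j'"
  shows "(\<Sum>i=j'..n. e i) \<le> (\<Sum>i=j..n. e i)"
proof (cases "j' \<le> n")
  case True
  then have "{j..n} = {j..<j'} \<union> {j'..n}" using assms(2) by auto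
  then have "(\<Sum>i=j..n. e i) = (\<Sum>i=j..<j'. e i) + (\<Sum>i=j'..n. e i)"
    by (simp add: sum.union_disjoint ivl_disj_int)
  moreover have "(\<Sum>i=j..<j'. e i) \<ge> 0" using assms True by (intro sum_nonneg) auto
  ultimately show ?thesis by simp
next
  case False
  have "0 \<le> (\<Sum>i=j..n. e i)" using assms(1) by (intro sum_nonneg) auto
  then show ?thesis using False by simp
qed

lemma sum_tail_strict_antimono:
  fixes e :: "nat \<Rightarrow> real"
  assumes "\<forall>i\<in>{j..n}. 0 < e i" "j < j'" "j \<le> n"
  shows "(\<Sum>i=j'..n. e i) < (\<Sum>i=j..n. e i)"
proof -
  have "(\<Sum>i=j'..n. e i) \<le> (\<Sum>i=Suc j..n. e i)"
    using assms by (intro sum_tail_antimono) (auto intro: less_imp_le)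
  also have "\<dots> < e j + (\<Sum>i=Suc j..n. e i)" using assms by simp
  also have "\<dots> = (\<Sum>i=j..n. e i)" using assms(3) by (simp add: sum.atLeast_Suc_atMost)
  finally show ?thesis .
qed

definition jumps_by :: "nat \<Rightarrow> (nat \<Rightarrow> real) \<Rightarrow> real \<Rightarrow> nat" where
  "jumps_by n e s = card {j \<in> {2..n}. (\<Sum>i=j..n. e i) \<le> s}"

lemma jumps_by_le: "jumps_by n e s \<le> n - 1"
proof -
  have "jumps_by n e s \<le> card {2..n}" unfolding jumps_by_def by (intro card_mono) auto
  then show ?thesis by simp
qed

lemma jumps_by_eqI:
  fixes e :: "nat \<Rightarrow> real"
  assumes pos: "\<forall>i\<in>{2..n}. 0 < e i" and k: "1 \<le> k" "k \<le> n"
    and after: "(\<Sum>i=k+1..n. e i) \<le> s" and before: "2 \<le> k \<Longrightarrow> s < (\<Sum>i=k..n. e i)"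
  shows "jumps_by n e s = n - k"
proof -
  have nonneg: "\<And>i. 2 \<le> i \<Longrightarrow> i \<le> n \<Longrightarrow> 0 \<le> e i" using pos by (simp add: less_imp_le)
  have "{j \<in> {2..n}. (\<Sum>i=j..n. e i) \<le> s} = {k+1..n}"
  proof (intro set_eqI iffI)
    fix j assume j: "j \<in> {j \<in> {2..n}. (\<Sum>i=j..n. e i) \<le> s}"
    show "j \<in> {k+1..n}"
    proof (rule ccontr)
      assume "j \<notin> {k+1..n}"
      then have "2 \<le> k" "(\<Sum>i=k..n. e i) \<le> (\<Sum>i=j..n. e i)"
        using j by (auto intro!: sum_tail_antimono nonneg)
      then show False using j before by auto
    qed
  next
    fix j assume "j \<in> {k+1..n}"
    moreover have "(\<Sum>i=j..n. e i) \<le> (\<Sum>i=k+1..n. e i)" if "k + 1 \<le> j"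
      using that k by (intro sum_tail_antimono) (auto intro: nonneg)
    ultimately show "j \<in> {j \<in> {2..n}. (\<Sum>i=j..n. e i) \<le> s}" using after k by auto
  qed
  then show ?thesis unfolding jumps_by_def by simp
qed

lemma jumps_by_eqD:
  fixes e :: "nat \<Rightarrow> real"
  assumes pos: "\<forall>i\<in>{2..n}. 0 < e i" and k: "1 \<le> k" "k \<le> n" and s: "0 \<le> s"
    and jumps: "jumps_by n e s = n - k"
  shows "(\<Sum>i=k+1..n. e i) \<le> s" "2 \<le> k \<Longrightarrow> s < (\<Sum>i=k..n. e i)"
proof -
  let ?S = "{j \<in> {2..n}. (\<Sum>i=j..n. e i) \<le> s}"
  have nonneg: "\<And>i. 2 \<le> i \<Longrightarrow> i \<le> n \<Longrightarrow> 0 \<le> e i" using pos by (simp add: less_imp_le)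
  show "(\<Sum>i=k+1..n. e i) \<le> s"
  proof (rule ccontr)
    assume late: "\<not> (\<Sum>i=k+1..n. e i) \<le> s"
    then have "k + 1 \<le> n" using s by (cases "k + 1 \<le> n") auto
    have "(\<Sum>i=k+1..n. e i) \<le> (\<Sum>i=j..n. e i)" if "2 \<le> j" "j \<le> k + 1" for j
      using that by (intro sum_tail_antimono) (auto intro: nonneg)
    then have "?S \<subseteq> {k+2..n}" using late by (force simp: not_less_eq_eq)
    then have "card ?S \<le> card {k+2..n}" by (intro card_mono) auto
    then show False using jumps \<open>k + 1 \<le> n\<close> unfolding jumps_by_def by simp
  qed
  assume "2 \<le> k"
  show "s < (\<Sum>i=k..n. e i)"
  proof (rule ccontr)
    assume early: "\<not> s < (\<Sum>i=k..n. e i)"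
    have "(\<Sum>i=j..n. e i) \<le> s" if "k \<le> j" for j
    proof -
      have "(\<Sum>i=j..n. e i) \<le> (\<Sum>i=k..n. e i)"
        using that \<open>2 \<le> k\<close> by (intro sum_tail_antimono) (auto intro: nonneg)
      then show ?thesis using early by linarith
    qed
    then have "{k..n} \<subseteq> ?S" using \<open>2 \<le> k\<close> by auto
    then have "card {k..n} \<le> card ?S" by (intro card_mono) auto
    then show False using jumps k unfolding jumps_by_def by simp
  qed
qed

lemma card_coal_path:
  assumes "\<forall>k\<in>{2..n}. v k \<in> block_pairs k" "1 \<le> n"
  shows "card (coal_path n e v s) = n - jumps_by n e s"
proof -
  have "jumps_by n e s < n" using jumps_by_le[of n e s] assms(2) by linarith
  then show ?thesis
    using jump_chain_finite_partition[OF assms(1)] unfolding coal_path_def jumps_by_def by simp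
qed

definition time_change :: "real \<Rightarrow> real \<Rightarrow> real" where
  "time_change \<gamma> t = t powr (\<gamma> + 1) / (\<gamma> + 1)"

definition time_change_inv :: "real \<Rightarrow> real \<Rightarrow> real" where
  "time_change_inv \<gamma> s = ((\<gamma> + 1) * s) powr (1 / (\<gamma> + 1))"

lemma time_change_time_change_inv: "\<gamma> > 0 \<Longrightarrow> s \<ge> 0 \<Longrightarrow> time_change \<gamma> (time_change_inv \<gamma> s) = s"
  unfolding time_change_def time_change_inv_def by (simp add: powr_powr)

lemma time_change_nonneg: "\<gamma> > 0 \<Longrightarrow> t \<ge> 0 \<Longrightarrow> time_change \<gamma> t \<ge> 0"
  unfolding time_change_def by simp

lemma time_change_inv_nonneg: "time_change_inv \<gamma> s \<ge> 0"
  unfolding time_change_inv_def by simp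

lemma time_change_mono: "\<gamma> > 0 \<Longrightarrow> 0 \<le> t \<Longrightarrow> t \<le> t' \<Longrightarrow> time_change \<gamma> t \<le> time_change \<gamma> t'"
  unfolding time_change_def by (intro divide_right_mono powr_mono2) auto

lemma time_change_strict_mono: "\<gamma> > 0 \<Longrightarrow> 0 \<le> t \<Longrightarrow> t < t' \<Longrightarrow> time_change \<gamma> t < time_change \<gamma> t'"
  unfolding time_change_def by (intro divide_strict_right_mono powr_less_mono2) auto

lemma le_time_change_iff:
  "\<gamma> > 0 \<Longrightarrow> 0 \<le> t \<Longrightarrow> 0 \<le> a \<Longrightarrow> a \<le> time_change \<gamma> t \<longleftrightarrow> time_change_inv \<gamma> a \<le> t"
  by (metis time_change_mono time_change_time_change_inv time_change_strict_mono time_change_inv_nonneg not_le)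

lemma U_time_coal_path:
  assumes \<gamma>: "\<gamma> > 0" and n: "1 \<le> n"
    and pos: "\<forall>i\<in>{2..n}. 0 < e i" and valid: "\<forall>k\<in>{2..n}. v k \<in> block_pairs k"
    and path: "\<forall>t\<ge>0. \<Theta> t \<omega> = coal_path n e v t"
    and k: "1 \<le> k" "k \<le> n"
  shows "U_time \<gamma> \<Theta> k \<omega> = time_change_inv \<gamma> (\<Sum>i=k+1..n. e i)"
proof -
  define T where "T = (\<lambda>j. \<Sum>i=j..n. e i)"
  have T_nonneg: "0 \<le> T (k + 1)"
    unfolding T_def using pos k by (intro sum_nonneg) (auto intro: less_imp_le)
  have card_eq_k: "card (\<Theta> (time_change \<gamma> t) \<omega>) = k \<longleftrightarrow>
      T (k + 1) \<le> time_change \<gamma> t \<and> (2 \<le> k \<longrightarrow> time_change \<gamma> t < T k)" if "0 \<le> t" for t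
  proof -
    have s: "0 \<le> time_change \<gamma> t" using time_change_nonneg[OF \<gamma> that] .
    have "card (\<Theta> (time_change \<gamma> t) \<omega>) = k \<longleftrightarrow> n - jumps_by n e (time_change \<gamma> t) = k"
      using path s card_coal_path[OF valid n] by simp
    also have "n - jumps_by n e (time_change \<gamma> t) = k \<longleftrightarrow> jumps_by n e (time_change \<gamma> t) = n - k"
      using jumps_by_le[of n e "time_change \<gamma> t"] k by linarith
    also have "\<dots> \<longleftrightarrow> T (k + 1) \<le> time_change \<gamma> t \<and> (2 \<le> k \<longrightarrow> time_change \<gamma> t < T k)"
      using jumps_by_eqI[OF pos k, of "time_change \<gamma> t"] jumps_by_eqD[OF pos k s]
      unfolding T_def by blast
    finally show ?thesis .
  qed
  have "{t. 0 \<le> t \<and> card (\<Theta> (t powr (\<gamma> + 1) / (\<gamma> + 1)) \<omega>) = k}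
      = {t. 0 \<le> t \<and> card (\<Theta> (time_change \<gamma> t) \<omega>) = k}"
    by (simp add: time_change_def)
  also have "\<dots> = {t. 0 \<le> t \<and> T (k + 1) \<le> time_change \<gamma> t \<and> (2 \<le> k \<longrightarrow> time_change \<gamma> t < T k)}"
    using card_eq_k by blast
  also have "Inf \<dots> = time_change_inv \<gamma> (T (k + 1))"
  proof (rule cInf_eq_minimum)
    have "2 \<le> k \<longrightarrow> T (k + 1) < T k"
      unfolding T_def using pos k by (auto intro!: sum_tail_strict_antimono)
    then show "time_change_inv \<gamma> (T (k + 1))
        \<in> {t. 0 \<le> t \<and> T (k + 1) \<le> time_change \<gamma> t \<and> (2 \<le> k \<longrightarrow> time_change \<gamma> t < T k)}"
      using time_change_time_change_inv[OF \<gamma> T_nonneg] time_change_inv_nonneg by simp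
  qed (use le_time_change_iff[OF \<gamma> _ T_nonneg] in auto)
  finally show ?thesis unfolding U_time_def T_def .
qed

section \<open>Riemann sums of monotone functions and the Beta integral\<close>

lemma integral_sum_grid_cells:
  fixes f :: "real \<Rightarrow> real"
  assumes f: "f integrable_on {0..1}" and "l \<le> h" "h \<le> n"
  shows "(\<Sum>j=l..<h. integral {real j / n..real (j + 1) / n} f) = integral {real l / n..real h / n} f"
  using assms(2,3)
proof (induction h)
  case (Suc h)
  show ?case
  proof (cases "l = Suc h")
    case False
    then have lh: "l \<le> h" "h \<le> n" using Suc.prems by auto
    have "(\<Sum>j=l..<Suc h. integral {real j / n..real (j + 1) / n} f)
        = integral {real l / n..real h / n} f + integral {real h / n..real (Suc h) / n} f"
      using Suc.IH[OF lh] lh by simp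
    also have "\<dots> = integral {real l / n..real (Suc h) / n} f"
    proof (rule Henstock_Kurzweil_Integration.integral_combine)
      show "real l / n \<le> real h / n" "real h / n \<le> real (Suc h) / n"
        using lh by (simp_all add: divide_right_mono)
      show "f integrable_on {real l / n..real (Suc h) / n}"
        using Suc.prems by (intro integrable_subinterval_real[OF f]) (auto simp: field_simps)
    qed
    finally show ?thesis .
  qed simp
qed simp

context
  fixes f :: "real \<Rightarrow> real"
  assumes integrable: "f integrable_on {0..1}"
    and antimono: "\<And>x y. 0 < x \<Longrightarrow> x \<le> y \<Longrightarrow> y \<le> 1 \<Longrightarrow> f y \<le> f x"
    and nonneg: "\<And>x. 0 \<le> x \<Longrightarrow> x \<le> 1 \<Longrightarrow> 0 \<le> f x"
begin

lemma riemann_sum_le_integral_antimono: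
  assumes "2 \<le> a" "a \<le> n"
  shows "(\<Sum>j=a..n-1. f (real j / n)) / n \<le> integral {0..1} f"
proof -
  have cell: "f (real j / n) / n \<le> integral {real (j - 1) / n..real (j - 1 + 1) / n} f"
    if j: "2 \<le> j" "j \<le> n" for j
  proof -
    have "f (real j / n) / n = integral {real (j - 1) / n..real j / n} (\<lambda>_. f (real j / n))"
      using j by (simp add: of_nat_diff field_simps)
    also have "\<dots> \<le> integral {real (j - 1) / n..real j / n} f"
    proof (rule integral_le)
      show "f integrable_on {real (j - 1) / n..real j / n}"
        using j by (intro integrable_subinterval_real[OF integrable]) auto
      fix x assume x: "x \<in> {real (j - 1) / n..real j / n}"
      have "0 < real (j - 1) / n" "real (j - 1) / n \<le> x" "x \<le> real j / n" using j x by auto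
      then have "0 < x" by linarith
      then show "f (real j / n) \<le> f x" using j \<open>x \<le> real j / n\<close> by (intro antimono) auto
    qed auto
    finally show ?thesis using j by simp
  qed
  have "(\<Sum>j=a..n-1. f (real j / n)) / n = (\<Sum>j=a..n-1. f (real j / n) / n)"
    by (simp add: sum_divide_distrib)
  also have "\<dots> \<le> (\<Sum>j=a..n-1. integral {real (j - 1) / n..real (j - 1 + 1) / n} f)"
    using assms by (intro sum_mono cell) auto
  also have "\<dots> = (\<Sum>i=a-1..<n-1. integral {real i / n..real (i + 1) / n} f)"
  proof -
    have "(\<lambda>j. j - 1) ` {a..n-1} = {a-1..<n-1}" using assms
      by (auto simp: image_iff intro!: bexI[where x="Suc _"])
    moreover have "inj_on (\<lambda>j. j - 1) {a..n-1}" using assms by (auto simp: inj_on_def)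
    ultimately show ?thesis by (simp add: sum.reindex_cong[where l="\<lambda>j. j - 1"])
  qed
  also have "\<dots> = integral {real (a - 1) / n..real (n - 1) / n} f"
    using assms by (intro integral_sum_grid_cells[OF integrable]) auto
  also have "\<dots> \<le> integral {0..1} f"
  proof (rule integral_subset_le)
    show "{real (a - 1) / n..real (n - 1) / n} \<subseteq> {0..1}" using assms by (auto simp: field_simps)
    then show "f integrable_on {real (a - 1) / n..real (n - 1) / n}"
      by (intro integrable_subinterval_real[OF integrable]) auto
  qed (use integrable nonneg in auto)
  finally show ?thesis .
qed

lemma integral_le_riemann_sum_antimono:
  assumes "1 \<le> a" "a \<le> n"
  shows "integral {real a / n..1} f \<le> (\<Sum>j=a..n-1. f (real j / n)) / n"
proof -
  have cell: "integral {real j / n..real (j + 1) / n} f \<le> f (real j / n) / n"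
    if j: "1 \<le> j" "j \<le> n - 1" for j
  proof -
    have "integral {real j / n..real (j + 1) / n} f \<le> integral {real j / n..real (j + 1) / n} (\<lambda>_. f (real j / n))"
    proof (rule integral_le)
      show "f integrable_on {real j / n..real (j + 1) / n}"
        using j by (intro integrable_subinterval_real[OF integrable]) auto
      fix x assume x: "x \<in> {real j / n..real (j + 1) / n}"
      have "0 < real j / n" "real (j + 1) / n \<le> 1" using j by auto
      then show "f x \<le> f (real j / n)" using x by (intro antimono) auto
    qed auto
    also have "\<dots> = f (real j / n) / n" using j by (simp add: field_simps)
    finally show ?thesis .
  qed
  have "integral {real a / n..1} f = integral {real a / n..real n / n} f" using assms by simp
  also have "\<dots> = (\<Sum>j=a..<n. integral {real j / n..real (j + 1) / n} f)"
    using assms by (intro integral_sum_grid_cells[OF integrable, symmetric]) auto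
  also have "\<dots> \<le> (\<Sum>j=a..<n. f (real j / n) / n)"
    using assms by (intro sum_mono cell) auto
  also have "{a..<n} = {a..n-1}" using assms by auto
  finally show ?thesis by (simp add: sum_divide_distrib)
qed

lemma riemann_sum_tendsto_integral_antimono:
  fixes a :: "nat \<Rightarrow> nat"
  assumes "eventually (\<lambda>n. 2 \<le> a n \<and> a n \<le> n) sequentially"
    and "(\<lambda>n. real (a n) / n) \<longlonglongrightarrow> 0"
  shows "(\<lambda>n. (\<Sum>j=a n..n-1. f (real j / n)) / n) \<longlonglongrightarrow> integral {0..1} f"
proof (rule real_tendsto_sandwich)
  define F where "F = (\<lambda>x. integral {0..x} f)"
  have "continuous (at 0 within {0..1}) F"
    unfolding F_def using indefinite_integral_continuous_1[OF integrable]
    by (simp add: continuous_on_eq_continuous_within)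
  moreover have "eventually (\<lambda>n. real (a n) / n \<in> {0..1}) sequentially"
    using assms(1) by eventually_elim auto
  ultimately have "(\<lambda>n. F (real (a n) / n)) \<longlonglongrightarrow> F 0"
    by (rule continuous_within_tendsto_compose[OF _ _ assms(2)])
  then have "(\<lambda>n. F (real (a n) / n)) \<longlonglongrightarrow> 0" unfolding F_def by simp
  then show "(\<lambda>n. integral {0..1} f - F (real (a n) / n)) \<longlonglongrightarrow> integral {0..1} f"
    using tendsto_diff[OF tendsto_const] by fastforce
  show "\<forall>\<^sub>F n in sequentially. integral {0..1} f - F (real (a n) / n) \<le> (\<Sum>j=a n..n-1. f (real j / n)) / n"
    using assms(1)
  proof eventually_elim
    case (elim n)
    then have "integral {0..1} f - F (real (a n) / n) = integral {real (a n) / n..1} f"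
      unfolding F_def
      using Henstock_Kurzweil_Integration.integral_combine[of 0 "real (a n) / n" 1 f] integrable by simp
    then show ?case using integral_le_riemann_sum_antimono elim by simp
  qed
  show "\<forall>\<^sub>F n in sequentially. (\<Sum>j=a n..n-1. f (real j / n)) / n \<le> integral {0..1} f"
    using assms(1) by eventually_elim (use riemann_sum_le_integral_antimono in blast)
qed simp

end

lemma Gamma_reflection_real: "Gamma (x :: real) * Gamma (1 - x) = pi / sin (pi * x)"
proof -
  have "complex_of_real (Gamma x * Gamma (1 - x)) = Gamma (complex_of_real x) * Gamma (1 - complex_of_real x)"
    by (simp add: Gamma_complex_of_real[symmetric])
  also have "\<dots> = complex_of_real pi / sin (complex_of_real pi * complex_of_real x)"
    by (rule Gamma_reflection_complex)
  also have "\<dots> = complex_of_real (pi / sin (pi * x))"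
    by (simp add: sin_of_real[symmetric])
  finally show ?thesis by (simp only: of_real_eq_iff)
qed

lemma Beta_one_minus_one_plus:
  fixes p :: real assumes "0 < p" "p < 1"
  shows "Beta (1 - p) (1 + p) = p * pi / sin (pi * p)"
proof -
  have "Gamma (2::real) = 1" using Gamma_plus1[of "1::real"] by simp
  moreover have "Gamma (1 + p) = p * Gamma p"
    using Gamma_plus1[of p] assms nonpos_Ints_nonpos[of p] by (metis add.commute not_le)
  ultimately have "Beta (1 - p) (1 + p) = p * (Gamma p * Gamma (1 - p))"
    unfolding Beta_def by simp
  then show ?thesis by (simp add: Gamma_reflection_real)
qed

definition beta_integrand :: "real \<Rightarrow> real \<Rightarrow> real" where
  "beta_integrand p x = x powr (- p) * (1 - x) powr p"

lemma has_integral_beta_integrand: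
  fixes p :: real assumes "0 < p" "p < 1"
  shows "(beta_integrand p has_integral (p * pi / sin (pi * p))) {0..1}"
proof -
  have "((\<lambda>t. t powr ((1 - p) - 1) * (1 - t) powr ((1 + p) - 1)) has_integral Beta (1 - p) (1 + p)) {0..1}"
    using assms by (intro has_integral_Beta_real) auto
  then show ?thesis using Beta_one_minus_one_plus[OF assms] unfolding beta_integrand_def by simp
qed

lemma beta_integrand_antimono:
  fixes p :: real assumes "0 < p" "0 < x" "x \<le> y" "y \<le> 1"
  shows "beta_integrand p y \<le> beta_integrand p x"
  unfolding beta_integrand_def
proof (rule mult_mono)
  show "y powr - p \<le> x powr - p" using assms by (intro powr_mono2') auto
  show "(1 - y) powr p \<le> (1 - x) powr p" using assms by (intro powr_mono2) auto
qed auto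

section \<open>Holding times and merge choices\<close>

lemma (in prob_space) expectation_square_sum_indep:
  fixes Y :: "'i \<Rightarrow> 'a \<Rightarrow> real"
  assumes "finite I" "indep_vars (\<lambda>_. borel) Y I"
    and "\<And>i. i \<in> I \<Longrightarrow> integrable M (Y i)"
    and "\<And>i. i \<in> I \<Longrightarrow> integrable M (\<lambda>\<omega>. (Y i \<omega>)\<^sup>2)"
    and "\<And>i. i \<in> I \<Longrightarrow> expectation (Y i) = 0"
  shows "integrable M (\<lambda>\<omega>. (\<Sum>i\<in>I. Y i \<omega>)\<^sup>2) \<and>
         expectation (\<lambda>\<omega>. (\<Sum>i\<in>I. Y i \<omega>)\<^sup>2) = (\<Sum>i\<in>I. expectation (\<lambda>\<omega>. (Y i \<omega>)\<^sup>2))"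
  using assms
proof (induction I rule: finite_induct)
  case (insert a I)
  have "indep_vars (\<lambda>_. borel) Y I" using insert.prems(1) by (rule indep_vars_subset) auto
  note IH = insert.IH[OF this insert.prems(2-4)]
  have cross: "integrable M (\<lambda>\<omega>. Y i \<omega> * Y a \<omega>) \<and> expectation (\<lambda>\<omega>. Y i \<omega> * Y a \<omega>) = 0"
    if i: "i \<in> I" for i
  proof -
    have "i \<noteq> a" using i insert.hyps by auto
    have ind: "indep_vars (\<lambda>_. borel) Y {i, a}"
      by (rule indep_vars_subset[OF insert.prems(1)]) (use i in auto)
    have int: "\<And>j. j \<in> {i, a} \<Longrightarrow> integrable M (Y j)" using insert.prems(2) i by auto
    have "integrable M (\<lambda>\<omega>. \<Prod>j\<in>{i, a}. Y j \<omega>)"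
      by (rule indep_vars_integrable[OF _ ind int]) auto
    moreover have "expectation (\<lambda>\<omega>. \<Prod>j\<in>{i, a}. Y j \<omega>) = (\<Prod>j\<in>{i, a}. expectation (Y j))"
      by (rule indep_vars_lebesgue_integral[OF _ ind int]) auto
    ultimately show ?thesis using insert.prems(4) i \<open>i \<noteq> a\<close> by simp
  qed
  have int_cross: "integrable M (\<lambda>\<omega>. \<Sum>i\<in>I. Y i \<omega> * Y a \<omega>)"
    using cross by (intro Bochner_Integration.integrable_sum) auto
  have exp_cross: "expectation (\<lambda>\<omega>. \<Sum>i\<in>I. Y i \<omega> * Y a \<omega>) = 0"
    using cross by (subst Bochner_Integration.integral_sum) auto
  have square: "(\<Sum>i\<in>insert a I. Y i \<omega>)\<^sup>2
      = (\<Sum>i\<in>I. Y i \<omega>)\<^sup>2 + 2 * (\<Sum>i\<in>I. Y i \<omega> * Y a \<omega>) + (Y a \<omega>)\<^sup>2" for \<omega>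
    using insert.hyps by (simp add: power2_sum sum_distrib_right sum_distrib_left algebra_simps)
  have "integrable M (\<lambda>\<omega>. (Y a \<omega>)\<^sup>2)" using insert.prems(3) by simp
  then show ?case
    unfolding square using IH int_cross exp_cross insert.hyps by (simp add: add.commute)
qed simp

lemma (in prob_space) exponential_distributed_centered_moments:
  assumes "0 < l" "distributed M lborel X (exponential_density l)"
  shows "integrable M (\<lambda>\<omega>. X \<omega> - 1 / l)" "integrable M (\<lambda>\<omega>. (X \<omega> - 1 / l)\<^sup>2)"
    "expectation (\<lambda>\<omega>. X \<omega> - 1 / l) = 0" "expectation (\<lambda>\<omega>. (X \<omega> - 1 / l)\<^sup>2) = (1 / l)\<^sup>2"
proof -
  have int: "integrable M X" "integrable M (\<lambda>\<omega>. (X \<omega>)\<^sup>2)"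
    using erlang_ith_moment_integrable[OF assms, of 1] erlang_ith_moment_integrable[OF assms, of 2] by simp_all
  then show "integrable M (\<lambda>\<omega>. X \<omega> - 1 / l)" by simp
  have "(X \<omega> - 1 / l)\<^sup>2 = (X \<omega>)\<^sup>2 - 2 / l * X \<omega> + (1 / l)\<^sup>2" for \<omega>
    by (simp add: power2_diff)
  then show "integrable M (\<lambda>\<omega>. (X \<omega> - 1 / l)\<^sup>2)" using int by simp
  have mean: "expectation X = 1 / l" using exponential_distributed_expectation[OF assms] by simp
  then show "expectation (\<lambda>\<omega>. X \<omega> - 1 / l) = 0" using int by (simp add: prob_space)
  show "expectation (\<lambda>\<omega>. (X \<omega> - 1 / l)\<^sup>2) = (1 / l)\<^sup>2"
    using exponential_distributed_variance[OF assms] mean by (simp add: power_divide)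
qed

lemma (in prob_space) indep_vars_centered_holding_times:
  fixes E :: "nat \<Rightarrow> 'a \<Rightarrow> real" and V :: "nat \<Rightarrow> 'a \<Rightarrow> nat \<times> nat"
  assumes ind: "indep_vars (\<lambda>_. borel \<Otimes>\<^sub>M count_space UNIV)
              (\<lambda>i \<omega>. case i of Inl k \<Rightarrow> (E k \<omega>, (0, 0)) | Inr k \<Rightarrow> (0, V k \<omega>))
              (Inl ` {2..n} \<union> Inr ` {2..n})"
    and A: "A \<subseteq> {2..n}"
  shows "indep_vars (\<lambda>_. borel) (\<lambda>i \<omega>. E (projl i) \<omega> - c (projl i)) (Inl ` A :: (nat + nat) set)"
proof -
  have "indep_vars (\<lambda>_. borel \<Otimes>\<^sub>M count_space UNIV)
      (\<lambda>i \<omega>. case i of Inl k \<Rightarrow> (E k \<omega>, (0, 0)) | Inr k \<Rightarrow> (0, V k \<omega>)) (Inl ` A)"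
    by (rule indep_vars_subset[OF ind]) (use A in auto)
  then have "indep_vars (\<lambda>_. borel) (\<lambda>i \<omega>. (\<lambda>z. fst z - c (projl i))
      (case i of Inl k \<Rightarrow> (E k \<omega>, (0, 0)) | Inr k \<Rightarrow> (0, V k \<omega>))) (Inl ` A)"
    by (rule indep_vars_compose2) measurable
  moreover have "indep_vars (\<lambda>_. borel) (\<lambda>i \<omega>. (\<lambda>z. fst z - c (projl i))
      (case i of Inl k \<Rightarrow> (E k \<omega>, (0, 0)) | Inr k \<Rightarrow> (0, V k \<omega>))) (Inl ` A)
    \<longleftrightarrow> indep_vars (\<lambda>_. borel) (\<lambda>i \<omega>. E (projl i) \<omega> - c (projl i)) (Inl ` A :: (nat + nat) set)"
    by (rule indep_vars_cong) (auto simp: fun_eq_iff)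
  ultimately show ?thesis by simp
qed

lemma (in prob_space) expectation_square_sum_centered_holding_times:
  fixes E :: "nat \<Rightarrow> 'a \<Rightarrow> real" and V :: "nat \<Rightarrow> 'a \<Rightarrow> nat \<times> nat"
  assumes dist: "\<forall>k\<in>{2..n}. distributed M lborel (E k) (\<lambda>x. ennreal (exponential_density (real (k choose 2)) x))"
    and ind: "indep_vars (\<lambda>_. borel \<Otimes>\<^sub>M count_space UNIV)
              (\<lambda>i \<omega>. case i of Inl k \<Rightarrow> (E k \<omega>, (0, 0)) | Inr k \<Rightarrow> (0, V k \<omega>))
              (Inl ` {2..n} \<union> Inr ` {2..n})"
    and A: "A \<subseteq> {2..n}"
  defines "c \<equiv> \<lambda>k. 1 / real (k choose 2)"
  shows "integrable M (\<lambda>\<omega>. (\<Sum>k\<in>A. E k \<omega> - c k)\<^sup>2)"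
    "expectation (\<lambda>\<omega>. (\<Sum>k\<in>A. E k \<omega> - c k)\<^sup>2) = (\<Sum>k\<in>A. (c k)\<^sup>2)"
proof -
  define Y where "Y = (\<lambda>(i :: nat + nat) \<omega>. E (projl i) \<omega> - c (projl i))"
  have fin: "finite A" using A finite_subset by blast
  have moments: "integrable M (Y (Inl k))" "integrable M (\<lambda>\<omega>. (Y (Inl k) \<omega>)\<^sup>2)"
    "expectation (Y (Inl k)) = 0" "expectation (\<lambda>\<omega>. (Y (Inl k) \<omega>)\<^sup>2) = (c k)\<^sup>2"
    if "k \<in> A" for k
    using exponential_distributed_centered_moments[of "real (k choose 2)" "E k"] dist that A
    by (auto simp only: Y_def c_def sum.sel atLeastAtMost_iff subset_iff of_nat_0_less_iff zero_less_binomial_iff)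
  have "indep_vars (\<lambda>_. borel) Y (Inl ` A)"
    unfolding Y_def by (rule indep_vars_centered_holding_times[OF ind A])
  then have "integrable M (\<lambda>\<omega>. (\<Sum>i\<in>Inl ` A. Y i \<omega>)\<^sup>2) \<and>
      expectation (\<lambda>\<omega>. (\<Sum>i\<in>Inl ` A. Y i \<omega>)\<^sup>2) = (\<Sum>i\<in>Inl ` A. expectation (\<lambda>\<omega>. (Y i \<omega>)\<^sup>2))"
    by (rule expectation_square_sum_indep[rotated]) (use fin moments in auto)
  moreover have "(\<Sum>i\<in>Inl ` A. g i) = (\<Sum>k\<in>A. g (Inl k))" for g :: "nat + nat \<Rightarrow> real"
    by (simp add: sum.reindex)
  ultimately show "integrable M (\<lambda>\<omega>. (\<Sum>k\<in>A. E k \<omega> - c k)\<^sup>2)"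
    "expectation (\<lambda>\<omega>. (\<Sum>k\<in>A. E k \<omega> - c k)\<^sup>2) = (\<Sum>k\<in>A. (c k)\<^sup>2)"
    using moments(4) by (simp_all add: Y_def)
qed

lemma real_choose_two: "real (k choose 2) = real k * (real k - 1) / 2"
proof -
  have "even (k * (k - 1))" by (cases "even k") (auto simp: even_mult_iff)
  then have "real (k choose 2) = real (k * (k - 1)) / 2" by (simp add: choose_two real_of_nat_div)
  also have "\<dots> = real k * (real k - 1) / 2" by (cases k) (auto simp: algebra_simps)
  finally show ?thesis .
qed

lemma sum_inverse_choose_two:
  assumes "1 \<le> j" "j \<le> n"
  shows "(\<Sum>i=j+1..n. 1 / real (i choose 2)) = 2 / j - 2 / n"
  using assms(2)
proof (induction n rule: dec_induct)
  case (step k)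
  have "1 / real (Suc k choose 2) = 2 / k - 2 / Suc k"
    using step.hyps assms(1) by (simp add: real_choose_two field_simps)
  then show ?case using step.IH step.hyps by simp
qed simp

lemma sum_square_inverse_choose_two_le:
  assumes "1 \<le> j" "j \<le> n"
  shows "(\<Sum>i=j+1..n. (1 / real (i choose 2))\<^sup>2) \<le> 4 / real j ^ 3"
proof -
  have le: "1 / real (i choose 2) \<le> 2 / (real j)\<^sup>2" if "i \<in> {j+1..n}" for i
  proof -
    have "(real j)\<^sup>2 \<le> real i * (real i - 1)"
      using that by (simp add: power2_eq_square mult_mono)
    then show ?thesis using that assms by (simp add: real_choose_two frac_le)
  qed
  have "(\<Sum>i=j+1..n. (1 / real (i choose 2))\<^sup>2) \<le> (\<Sum>i=j+1..n. 2 / (real j)\<^sup>2 * (1 / real (i choose 2)))"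
    unfolding power2_eq_square[of "1 / _"] using le by (intro sum_mono mult_right_mono) auto
  also have "\<dots> = 2 / (real j)\<^sup>2 * (\<Sum>i=j+1..n. 1 / real (i choose 2))"
    by (rule sum_distrib_left[symmetric])
  also have "\<dots> = 2 / (real j)\<^sup>2 * (2 / j - 2 / n)"
    by (simp only: sum_inverse_choose_two[OF assms])
  also have "\<dots> \<le> 2 / (real j)\<^sup>2 * (2 / j)" using assms by (intro mult_left_mono) auto
  also have "\<dots> = 4 / real j ^ 3" by (simp add: power2_eq_square power3_eq_cube)
  finally show ?thesis .
qed

lemma (in prob_space) tail_sum_second_moment:
  fixes E :: "nat \<Rightarrow> 'a \<Rightarrow> real" and V :: "nat \<Rightarrow> 'a \<Rightarrow> nat \<times> nat"
  assumes dist: "\<forall>k\<in>{2..n}. distributed M lborel (E k) (\<lambda>x. ennreal (exponential_density (real (k choose 2)) x))"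
    and ind: "indep_vars (\<lambda>_. borel \<Otimes>\<^sub>M count_space UNIV)
              (\<lambda>i \<omega>. case i of Inl k \<Rightarrow> (E k \<omega>, (0, 0)) | Inr k \<Rightarrow> (0, V k \<omega>))
              (Inl ` {2..n} \<union> Inr ` {2..n})"
    and j: "1 \<le> j" "j \<le> n"
  shows "integrable M (\<lambda>\<omega>. ((\<Sum>i=j+1..n. E i \<omega>) - (2 / j - 2 / n))\<^sup>2)"
    and "expectation (\<lambda>\<omega>. ((\<Sum>i=j+1..n. E i \<omega>) - (2 / j - 2 / n))\<^sup>2) \<le> 4 / real j ^ 3"
proof -
  have A: "{j+1..n} \<subseteq> {2..n}" using j by auto
  have centered: "(\<Sum>i=j+1..n. E i \<omega>) - (2 / j - 2 / n) = (\<Sum>k=j+1..n. E k \<omega> - 1 / real (k choose 2))" for \<omega>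
    using sum_subtractf[of "\<lambda>k. E k \<omega>" "\<lambda>k. 1 / real (k choose 2)" "{j+1..n}"]
    by (simp only: sum_inverse_choose_two[OF j])
  show "integrable M (\<lambda>\<omega>. ((\<Sum>i=j+1..n. E i \<omega>) - (2 / j - 2 / n))\<^sup>2)"
    unfolding centered by (rule expectation_square_sum_centered_holding_times(1)[OF dist ind A])
  show "expectation (\<lambda>\<omega>. ((\<Sum>i=j+1..n. E i \<omega>) - (2 / j - 2 / n))\<^sup>2) \<le> 4 / real j ^ 3"
    unfolding centered expectation_square_sum_centered_holding_times(2)[OF dist ind A]
    by (rule sum_square_inverse_choose_two_le[OF j])
qed

lemma finite_block_pairs: "finite (block_pairs k)"
  by (rule finite_subset[of _ "{..<k} \<times> {..<k}"]) (auto simp: block_pairs_def)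

lemma card_block_pairs_pos:
  assumes "2 \<le> k" shows "0 < card (block_pairs k)"
proof -
  have "(0, 1) \<in> block_pairs k" using assms by (simp add: block_pairs_def)
  then show ?thesis using finite_block_pairs[of k] by (subst card_gt_0_iff) auto
qed

lemma (in prob_space) exponential_distributed_AE_pos:
  assumes "0 < l" "distributed M lborel X (exponential_density l)"
  shows "AE \<omega> in M. 0 < X \<omega>"
proof -
  have "X \<in> borel_measurable M" using distributed_measurable[OF assms(2)] by simp
  then have "{\<omega> \<in> space M. X \<omega> \<le> 0} \<in> sets M" by measurable
  moreover have "prob {\<omega> \<in> space M. X \<omega> \<le> 0} = 0"
    using exponential_distributedD_le[OF assms(2) _ assms(1), of 0] by simp
  ultimately have "{\<omega> \<in> space M. X \<omega> \<le> 0} \<in> null_sets M"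
    by (simp add: emeasure_eq_measure null_sets_def)
  then show ?thesis by (rule AE_I') auto
qed

lemma (in prob_space) AE_uniform_mem:
  assumes V: "V \<in> measurable M (count_space UNIV)" and S: "finite S" "0 < card S"
    and uniform: "\<forall>p\<in>S. prob {\<omega> \<in> space M. V \<omega> = p} = 1 / real (card S)"
  shows "AE \<omega> in M. V \<omega> \<in> S"
proof -
  interpret distr_V: prob_space "distr M (count_space UNIV) V" by (rule prob_space_distr[OF V])
  have "prob (V -` S \<inter> space M) = measure (distr M (count_space UNIV) V) S"
    using measure_distr[OF V] by simp
  also have "\<dots> = (\<Sum>p\<in>S. measure (distr M (count_space UNIV) V) {p})"
    by (rule distr_V.finite_measure_eq_sum_singleton[OF S(1)]) simp
  also have "\<dots> = (\<Sum>p\<in>S. prob {\<omega> \<in> space M. V \<omega> = p})"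
    using measure_distr[OF V] by (intro sum.cong) (auto simp: vimage_def Int_def conj_commute)
  also have "\<dots> = 1" using uniform S by (simp add: card_gt_0_iff)
  finally have "AE \<omega> in M. \<omega> \<in> V -` S \<inter> space M" by (rule AE_prob_1)
  then show ?thesis by eventually_elim auto
qed

lemma (in prob_space) AE_holding_times_pos_choices_valid:
  fixes E :: "nat \<Rightarrow> 'a \<Rightarrow> real" and V :: "nat \<Rightarrow> 'a \<Rightarrow> nat \<times> nat"
  assumes "\<forall>k\<in>{2..n}. distributed M lborel (E k) (\<lambda>x. ennreal (exponential_density (real (k choose 2)) x))"
    and "\<forall>k\<in>{2..n}. V k \<in> measurable M (count_space UNIV) \<and>
              (\<forall>p\<in>block_pairs k. prob {\<omega> \<in> space M. V k \<omega> = p} = 1 / real (card (block_pairs k)))"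
  shows "AE \<omega> in M. \<forall>k\<in>{2..n}. 0 < E k \<omega> \<and> V k \<omega> \<in> block_pairs k"
proof (rule AE_finite_allI)
  fix k assume k: "k \<in> {2..n}"
  have "AE \<omega> in M. 0 < E k \<omega>"
    using exponential_distributed_AE_pos[of "real (k choose 2)" "E k"] assms(1) k by simp
  moreover have "AE \<omega> in M. V k \<omega> \<in> block_pairs k"
    using AE_uniform_mem[OF _ finite_block_pairs card_block_pairs_pos] assms(2) k by auto
  ultimately show "AE \<omega> in M. 0 < E k \<omega> \<and> V k \<omega> \<in> block_pairs k" by eventually_elim auto
qed simp

section \<open>Elementary inequalities\<close>

lemma sum_mult_diff_by_parts:
  fixes U :: "nat \<Rightarrow> real"
  assumes "1 \<le> m" "m \<le> n"
  shows "(\<Sum>k=m..n. real k * (U (k - 1) - U k)) = real m * U (m - 1) - real n * U n + (\<Sum>j=m..n-1. U j)"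
  using assms(2)
proof (induction n rule: dec_induct)
  case (step k)
  have "{m..k} = insert k {m..k-1}" "k \<notin> {m..k-1}" using step.hyps assms by auto
  then show ?case using step.IH step.hyps by (simp add: algebra_simps)
qed (use assms in \<open>auto simp: algebra_simps\<close>)

lemma powr_add_le:
  fixes a b p :: real
  assumes "0 \<le> a" "0 \<le> b" "0 < p" "p \<le> 1"
  shows "(a + b) powr p \<le> a powr p + b powr p"
proof (cases "a + b = 0")
  case False
  then have ab: "0 < a + b" using assms by simp
  have le_powr: "r \<le> r powr p" if "0 \<le> r" "r \<le> 1" for r :: real
  proof (cases "r = 0")
    case False
    then have "r powr 1 \<le> r powr p" using that assms by (intro powr_mono') auto
    then show ?thesis using False that by simp
  qed simp
  have share: "(a + b) powr p * (x / (a + b)) \<le> x powr p" if "0 \<le> x" "x \<le> a + b" for x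
  proof -
    have "(a + b) powr p * (x / (a + b)) \<le> (a + b) powr p * (x / (a + b)) powr p"
      using that ab le_powr[of "x / (a + b)"] by (intro mult_left_mono) auto
    also have "\<dots> = x powr p" using that ab by (simp add: powr_divide)
    finally show ?thesis .
  qed
  have "a / (a + b) + b / (a + b) = 1" using ab by (simp add: add_divide_distrib[symmetric])
  then have "(a + b) powr p = (a + b) powr p * (a / (a + b)) + (a + b) powr p * (b / (a + b))"
    by (metis distrib_left mult_1_right)
  then show ?thesis using share[of a] share[of b] assms by linarith
qed (use assms in simp)

lemma abs_powr_diff_le:
  fixes x y p :: real
  assumes "0 \<le> x" "0 \<le> y" "0 < p" "p \<le> 1"
  shows "\<bar>x powr p - y powr p\<bar> \<le> \<bar>x - y\<bar> powr p"
proof (cases "y \<le> x")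
  case True
  have "x powr p \<le> (x - y) powr p + y powr p" using powr_add_le[of "x - y" y p] True assms by simp
  moreover have "y powr p \<le> x powr p" using True assms by (intro powr_mono2) auto
  ultimately show ?thesis using True by simp
next
  case False
  have "y powr p \<le> (y - x) powr p + x powr p" using powr_add_le[of "y - x" x p] False assms by simp
  moreover have "x powr p \<le> y powr p" using False assms by (intro powr_mono2) auto
  ultimately show ?thesis using False by simp
qed

text \<open>Split at the threshold j powr (-3/2), the order of the standard deviation of the
  j-th tail sum: below it x powr p is small, above it x powr p is dominated by x^2.\<close>
lemma powr_le_threshold_plus_square:
  fixes x p j :: real
  assumes "0 \<le> x" "0 < p" "p < 1" "1 \<le> j"
  shows "x powr p \<le> j powr (- 3 * p / 2) + j powr (3 - 3 * p / 2) * x\<^sup>2"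
proof -
  define t where "t = j powr (- 3 / 2)"
  have "0 < t" using assms by (simp add: t_def)
  have t_p: "t powr p = j powr (- 3 * p / 2)" unfolding t_def using assms by (simp add: powr_powr)
  have exponent: "- 3 / 2 * (p - 2) = 3 - 3 * p / 2" by (simp add: field_simps)
  have t_p2: "t powr (p - 2) = j powr (3 - 3 * p / 2)"
    unfolding t_def powr_powr exponent ..
  show ?thesis
  proof (cases "x \<le> t")
    case True
    then have "x powr p \<le> t powr p" using assms by (intro powr_mono2) auto
    then show ?thesis using t_p by (simp add: add_increasing2)
  next
    case False
    then have "0 < x" using \<open>0 < t\<close> by simp
    have "x powr p = x powr (p - 2) * x powr 2"
      by (simp add: powr_add[symmetric])
    also have "x powr 2 = x\<^sup>2" using \<open>0 < x\<close> by (simp add: powr_realpow)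
    finally have "x powr p = x powr (p - 2) * x\<^sup>2" .
    also have "\<dots> \<le> t powr (p - 2) * x\<^sup>2"
      using False \<open>0 < t\<close> assms by (intro mult_right_mono powr_mono2') auto
    finally show ?thesis using t_p2 by (simp add: add_increasing)
  qed
qed

section \<open>The deterministic approximation\<close>

definition cutoff :: "nat \<Rightarrow> nat" where
  "cutoff n = nat \<lceil>real n powr (3/4)\<rceil> + 1"

lemma two_le_cutoff: "1 \<le> n \<Longrightarrow> 2 \<le> cutoff n"
proof -
  assume "1 \<le> n"
  then have "0 < real n powr (3/4)" by simp
  then have "1 \<le> \<lceil>real n powr (3/4)\<rceil>" by (simp add: one_le_ceiling)
  then show ?thesis unfolding cutoff_def by linarith
qed

lemma cutoff_minus_one_ge: "real n powr (3/4) \<le> real (cutoff n - 1)"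
proof -
  have "real n powr (3/4) \<le> real_of_int \<lceil>real n powr (3/4)\<rceil>" by (rule le_of_int_ceiling)
  also have "\<dots> = real (nat \<lceil>real n powr (3/4)\<rceil>)" by simp
  finally show ?thesis unfolding cutoff_def by simp
qed

lemma cutoff_le: "real (cutoff n) \<le> real n powr (3/4) + 2"
proof -
  have "0 \<le> real n powr (3/4)" by simp
  then have "0 \<le> \<lceil>real n powr (3/4)\<rceil>" by (subst zero_le_ceiling) linarith
  then show ?thesis
    unfolding cutoff_def using ceiling_correct[of "real n powr (3/4)"] by simp
qed

lemma cutoff_over_tendsto_0: "(\<lambda>n. real (cutoff n) / real n) \<longlonglongrightarrow> 0"
proof (rule real_tendsto_sandwich[where f="\<lambda>_. 0" and h="\<lambda>n. (real n powr (3/4) + 2) / real n"])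
  show "\<forall>\<^sub>F n in sequentially. real (cutoff n) / real n \<le> (real n powr (3/4) + 2) / real n"
    using cutoff_le by (intro always_eventually allI divide_right_mono) auto
qed (auto, real_asymp)

lemma eventually_cutoff_le: "eventually (\<lambda>n. 1 \<le> n \<and> 2 \<le> cutoff n \<and> cutoff n \<le> n) sequentially"
proof -
  have "eventually (\<lambda>n. real (cutoff n) / real n < 1) sequentially"
    using cutoff_over_tendsto_0 by (rule order_tendstoD) simp
  moreover have "eventually (\<lambda>n. 1 \<le> n) sequentially" by (rule eventually_ge_at_top)
  ultimately show ?thesis
  proof eventually_elim
    case (elim n)
    then have "real (cutoff n) < real n" by (simp add: field_simps)
    then show ?case using elim two_le_cutoff by simp
  qed
qed

lemma cutoff_powr_tendsto_0:
  assumes "0 < a" shows "(\<lambda>n. real (cutoff n) powr (- a)) \<longlonglongrightarrow> 0"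
proof (rule tendsto_neg_powr[OF _ filterlim_at_top_mono])
  show "filterlim (\<lambda>n::nat. real n powr (3/4)) at_top sequentially" by real_asymp
  show "\<forall>\<^sub>F n in sequentially. real n powr (3/4) \<le> real (cutoff n)"
  proof (intro always_eventually allI)
    fix n
    have "real (cutoff n - 1) \<le> real (cutoff n)" by simp
    then show "real n powr (3/4) \<le> real (cutoff n)" using cutoff_minus_one_ge[of n] by linarith
  qed
qed (use assms in simp)

lemma cutoff_ratio_powr_tendsto_0:
  assumes "0 < a" shows "(\<lambda>n. (real (cutoff n - 1) / real n) powr a) \<longlonglongrightarrow> 0"
proof (rule tendsto_zero_powrI[OF _ tendsto_const])
  show "(\<lambda>n. real (cutoff n - 1) / real n) \<longlonglongrightarrow> 0"
  proof (rule real_tendsto_sandwich[where f="\<lambda>_. 0" and h="\<lambda>n. real (cutoff n) / real n"])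
    show "\<forall>\<^sub>F n in sequentially. real (cutoff n - 1) / real n \<le> real (cutoff n) / real n"
      by (intro always_eventually allI divide_right_mono) auto
  qed (auto simp: cutoff_over_tendsto_0)
qed (use assms in auto)

lemma inverse_plus_one_bounds: "(\<gamma>::real) > 0 \<Longrightarrow> 0 < 1 / (\<gamma> + 1) \<and> 1 / (\<gamma> + 1) < 1"
  by (simp add: divide_less_eq)

text \<open>2 / j - 2 / n is the mean of the tail sum E (j + 1) + ... + E n.\<close>
definition mean_hitting_time :: "real \<Rightarrow> nat \<Rightarrow> nat \<Rightarrow> real" where
  "mean_hitting_time \<gamma> n j = time_change_inv \<gamma> (2 / real j - 2 / real n)"

lemma mean_hitting_time_nonneg: "0 \<le> mean_hitting_time \<gamma> n j"
  unfolding mean_hitting_time_def by (rule time_change_inv_nonneg)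

lemma mean_hitting_time_eq_beta_integrand:
  assumes \<gamma>: "\<gamma> > 0" and p: "p = 1 / (\<gamma> + 1)" and j: "1 \<le> j" "j \<le> n"
  shows "mean_hitting_time \<gamma> n j = (2 * (\<gamma> + 1)) powr p * (real n powr (- p) * beta_integrand p (real j / real n))"
proof -
  have n: "0 < real n" and jj: "0 < real j" and jn: "real j \<le> real n" using j by auto
  have "(real j / real n) powr (- p) = (real n / real j) powr p"
    using n jj by (simp add: powr_minus_divide powr_divide)
  moreover have "(real n / real j) * (1 - real j / real n) = (real n - real j) / real j"
    using n jj by (simp add: field_simps)
  ultimately have beta: "beta_integrand p (real j / real n) = ((real n - real j) / real j) powr p"
    unfolding beta_integrand_def using n jj jn by (metis divide_nonneg_nonneg of_nat_0_le_iff powr_mult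
      diff_ge_0_iff_ge divide_le_eq_1 order_less_imp_le)
  have "(\<gamma> + 1) * (2 / real j - 2 / real n) = (2 * (\<gamma> + 1)) * ((1 / real n) * ((real n - real j) / real j))"
    using n jj by (simp add: field_simps)
  then have "mean_hitting_time \<gamma> n j = ((2 * (\<gamma> + 1)) * ((1 / real n) * ((real n - real j) / real j))) powr p"
    unfolding mean_hitting_time_def time_change_inv_def p by simp
  also have "\<dots> = (2 * (\<gamma> + 1)) powr p * ((1 / real n) powr p * ((real n - real j) / real j) powr p)"
  proof -
    have "0 \<le> 2 * (\<gamma> + 1)" "0 \<le> 1 / real n" "0 \<le> (real n - real j) / real j"
      using \<gamma> jn jj by auto
    then show ?thesis by (simp only: powr_mult)
  qed
  also have "(1 / real n) powr p = real n powr (- p)" using n by (simp add: powr_minus_divide powr_divide)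
  finally show ?thesis unfolding beta .
qed

lemma mean_hitting_time_sum_tendsto:
  assumes \<gamma>: "\<gamma> > 0" and p: "p = 1 / (\<gamma> + 1)"
  shows "(\<lambda>n. (\<Sum>j=cutoff n..n-1. mean_hitting_time \<gamma> n j) / real n powr (1 - p))
    \<longlonglongrightarrow> (2 * (\<gamma> + 1)) powr p * (p * pi / sin (pi * p))"
proof -
  have p01: "0 < p" "p < 1" using inverse_plus_one_bounds[OF \<gamma>] p by auto
  note beta = has_integral_beta_integrand[OF p01]
  have "eventually (\<lambda>n. 2 \<le> cutoff n \<and> cutoff n \<le> n) sequentially"
    using eventually_cutoff_le by eventually_elim auto
  from riemann_sum_tendsto_integral_antimono[OF has_integral_integrable[OF beta]
      beta_integrand_antimono[OF p01(1)] _ this cutoff_over_tendsto_0]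
  have "(\<lambda>n. (2 * (\<gamma> + 1)) powr p * ((\<Sum>j=cutoff n..n-1. beta_integrand p (real j / n)) / n))
      \<longlonglongrightarrow> (2 * (\<gamma> + 1)) powr p * (p * pi / sin (pi * p))"
    unfolding integral_unique[OF beta] by (intro tendsto_mult_left) (auto simp: beta_integrand_def)
  moreover have "eventually (\<lambda>n. (2 * (\<gamma> + 1)) powr p * ((\<Sum>j=cutoff n..n-1. beta_integrand p (real j / n)) / n)
      = (\<Sum>j=cutoff n..n-1. mean_hitting_time \<gamma> n j) / real n powr (1 - p)) sequentially"
    using eventually_cutoff_le
  proof eventually_elim
    case (elim n)
    have "real n powr (- p) / real n powr (1 - p) = real n powr (- 1)"
      by (simp add: powr_diff[symmetric])
    then have ratio: "real n powr (- p) / real n powr (1 - p) = 1 / real n"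
      using elim by (simp add: powr_minus_divide)
    have "(\<Sum>j=cutoff n..n-1. mean_hitting_time \<gamma> n j)
        = (\<Sum>j=cutoff n..n-1. (2 * (\<gamma> + 1)) powr p * (real n powr (- p) * beta_integrand p (real j / real n)))"
      using elim by (intro sum.cong refl mean_hitting_time_eq_beta_integrand[OF \<gamma> p]) auto
    also have "\<dots> = (2 * (\<gamma> + 1)) powr p * real n powr (- p) * (\<Sum>j=cutoff n..n-1. beta_integrand p (real j / real n))"
      by (simp add: sum_distrib_left mult.assoc)
    finally
    have "(\<Sum>j=cutoff n..n-1. mean_hitting_time \<gamma> n j) / real n powr (1 - p)
        = (2 * (\<gamma> + 1)) powr p * (real n powr (- p) / real n powr (1 - p))
          * (\<Sum>j=cutoff n..n-1. beta_integrand p (real j / real n))"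
      by simp
    then show ?case unfolding ratio by simp
  qed
  ultimately show ?thesis by (rule Lim_transform_eventually)
qed

definition weight_sum :: "real \<Rightarrow> nat \<Rightarrow> real" where
  "weight_sum p n = real (cutoff n) * real (cutoff n - 1) powr (- 3 * p / 2)
     + (\<Sum>j=cutoff n..n-1. real j powr (- 3 * p / 2))"

lemma weight_sum_nonneg: "0 \<le> weight_sum p n"
  unfolding weight_sum_def by (intro add_nonneg_nonneg sum_nonneg) auto

lemma weight_sum_le:
  assumes p: "0 < p" "p < 1" and n: "1 \<le> n" "2 \<le> cutoff n" "cutoff n \<le> n"
  shows "weight_sum p n / real n powr (1 - p) \<le> 2 * (real (cutoff n - 1) / real n) powr (1 - p)
            + real (cutoff n) powr (- p / 2) * integral {0..1} (\<lambda>x. x powr (- p))"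
proof -
  define m where "m = cutoff n"
  define I where "I = integral {0..1} (\<lambda>x::real. x powr (- p))"
  have m1: "1 \<le> real (m - 1)" and m_le: "real m \<le> 2 * real (m - 1)" and "0 < real n"
    using n by (auto simp: m_def of_nat_diff)
  have first: "real m * real (m - 1) powr (- 3 * p / 2) \<le> 2 * real (m - 1) powr (1 - p)"
  proof -
    have "real m * real (m - 1) powr (- 3 * p / 2) \<le> (2 * real (m - 1)) * real (m - 1) powr (- p)"
      using m1 m_le p by (intro mult_mono powr_mono) auto
    also have "\<dots> = 2 * real (m - 1) powr (1 - p)"
      using powr_add[of "real (m - 1)" 1 "- p"] m1 by simp
    finally show ?thesis .
  qed
  have riemann: "(\<Sum>j=m..n-1. (real j / n) powr (- p)) / n \<le> I"
    unfolding I_def using n p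
    by (intro riemann_sum_le_integral_antimono integrable_on_powr_from_0 powr_mono2') (auto simp: m_def)
  have "(\<Sum>j=m..n-1. real j powr (- 3 * p / 2)) \<le> (\<Sum>j=m..n-1. real m powr (- p / 2) * real j powr (- p))"
  proof (intro sum_mono)
    fix j assume j: "j \<in> {m..n-1}"
    have "real j powr (- 3 * p / 2) = real j powr (- p / 2) * real j powr (- p)"
      by (simp add: powr_add[symmetric])
    also have "\<dots> \<le> real m powr (- p / 2) * real j powr (- p)"
      using j n p by (intro mult_right_mono powr_mono2') (auto simp: m_def)
    finally show "real j powr (- 3 * p / 2) \<le> real m powr (- p / 2) * real j powr (- p)" .
  qed
  also have "\<dots> = real m powr (- p / 2) * (real n powr (1 - p) * ((\<Sum>j=m..n-1. (real j / n) powr (- p)) / n))"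
  proof -
    have "(\<Sum>j=m..n-1. real j powr (- p)) = real n powr (- p) * (\<Sum>j=m..n-1. (real j / n) powr (- p))"
      using \<open>0 < real n\<close> by (simp add: sum_distrib_left powr_divide)
    moreover have "real n powr (- p) = real n powr (1 - p) / real n"
      using \<open>0 < real n\<close> by (simp add: powr_diff powr_minus_divide)
    ultimately show ?thesis by (simp add: sum_distrib_left[symmetric])
  qed
  also have "\<dots> \<le> real m powr (- p / 2) * (real n powr (1 - p) * I)"
    using riemann by (intro mult_left_mono) auto
  finally have "weight_sum p n \<le> 2 * real (m - 1) powr (1 - p) + real m powr (- p / 2) * (real n powr (1 - p) * I)"
    unfolding weight_sum_def m_def[symmetric] using first by linarith
  then have "weight_sum p n / real n powr (1 - p)
      \<le> (2 * real (m - 1) powr (1 - p) + real m powr (- p / 2) * (real n powr (1 - p) * I)) / real n powr (1 - p)"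
    by (intro divide_right_mono) auto
  also have "\<dots> = 2 * (real (m - 1) / real n) powr (1 - p) + real m powr (- p / 2) * I"
    using \<open>0 < real n\<close> by (simp add: field_simps powr_divide)
  finally show ?thesis unfolding m_def I_def .
qed

lemma weight_sum_tendsto_0:
  assumes "0 < p" "p < 1"
  shows "(\<lambda>n. weight_sum p n / real n powr (1 - p)) \<longlonglongrightarrow> 0"
proof (rule real_tendsto_sandwich[where f="\<lambda>_. 0"])
  show "\<forall>\<^sub>F n in sequentially. weight_sum p n / real n powr (1 - p) \<le> 2 * (real (cutoff n - 1) / real n) powr (1 - p)
            + real (cutoff n) powr (- p / 2) * integral {0..1} (\<lambda>x. x powr (- p))"
    using eventually_cutoff_le by eventually_elim (use weight_sum_le[OF assms] in auto)
  show "(\<lambda>n. 2 * (real (cutoff n - 1) / real n) powr (1 - p)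
      + real (cutoff n) powr (- p / 2) * integral {0..1} (\<lambda>x. x powr (- p))) \<longlonglongrightarrow> 0"
    using tendsto_add[OF tendsto_mult_left[OF cutoff_ratio_powr_tendsto_0]
        tendsto_mult_right[OF cutoff_powr_tendsto_0]] assms by simp
qed (auto simp: weight_sum_nonneg)

lemma cutoff_mean_hitting_time_le:
  assumes \<gamma>: "\<gamma> > 0" and p: "p = 1 / (\<gamma> + 1)" and n: "1 \<le> n" "2 \<le> cutoff n" "cutoff n \<le> n"
  shows "real (cutoff n) * mean_hitting_time \<gamma> n (cutoff n - 1) / real n powr (1 - p)
      \<le> (2 * (\<gamma> + 1)) powr p * (2 * (real (cutoff n - 1) / real n) powr (1 - p))"
proof -
  define m where "m = cutoff n"
  have m1: "1 \<le> real (m - 1)" and m_le: "real m \<le> 2 * real (m - 1)" and "0 < real n"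
    using n by (auto simp: m_def of_nat_diff)
  have "0 < p" using inverse_plus_one_bounds[OF \<gamma>] p by simp
  have "2 / real n \<le> 2 / real (m - 1)" using m1 n by (intro divide_left_mono) (auto simp: m_def)
  then have "mean_hitting_time \<gamma> n (m - 1) \<le> ((\<gamma> + 1) * (2 / real (m - 1))) powr p"
    unfolding mean_hitting_time_def time_change_inv_def p[symmetric]
    using \<gamma> \<open>0 < p\<close> by (intro powr_mono2 mult_left_mono) auto
  also have "\<dots> = (2 * (\<gamma> + 1)) powr p * real (m - 1) powr (- p)"
    using m1 \<gamma> by (simp add: powr_mult powr_divide powr_minus_divide field_simps)
  finally have "real m * mean_hitting_time \<gamma> n (m - 1)
      \<le> (2 * real (m - 1)) * ((2 * (\<gamma> + 1)) powr p * real (m - 1) powr (- p))"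
    using m_le by (intro mult_mono) (auto simp: mean_hitting_time_nonneg)
  also have "\<dots> = (2 * (\<gamma> + 1)) powr p * (2 * real (m - 1) powr (1 - p))"
    using powr_add[of "real (m - 1)" 1 "- p"] m1 by simp
  finally show ?thesis
    unfolding m_def[symmetric] using \<open>0 < real n\<close> by (simp add: divide_right_mono powr_divide)
qed

definition bias_bound :: "real \<Rightarrow> real \<Rightarrow> nat \<Rightarrow> real" where
  "bias_bound \<gamma> p n = (real (cutoff n) * mean_hitting_time \<gamma> n (cutoff n - 1) + (\<gamma> + 1) powr p * weight_sum p n)
     / real n powr (1 - p)"

lemma bias_bound_tendsto_0:
  assumes \<gamma>: "\<gamma> > 0" and p: "p = 1 / (\<gamma> + 1)"
  shows "(\<lambda>n. bias_bound \<gamma> p n) \<longlonglongrightarrow> 0"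
proof -
  have p01: "0 < p" "p < 1" using inverse_plus_one_bounds[OF \<gamma>] p by auto
  have "(\<lambda>n. real (cutoff n) * mean_hitting_time \<gamma> n (cutoff n - 1) / real n powr (1 - p)) \<longlonglongrightarrow> 0"
  proof (rule real_tendsto_sandwich[where f="\<lambda>_. 0"])
    show "\<forall>\<^sub>F n in sequentially. real (cutoff n) * mean_hitting_time \<gamma> n (cutoff n - 1) / real n powr (1 - p)
        \<le> (2 * (\<gamma> + 1)) powr p * (2 * (real (cutoff n - 1) / real n) powr (1 - p))"
      using eventually_cutoff_le by eventually_elim (use cutoff_mean_hitting_time_le[OF \<gamma> p] in auto)
    show "(\<lambda>n. (2 * (\<gamma> + 1)) powr p * (2 * (real (cutoff n - 1) / real n) powr (1 - p))) \<longlonglongrightarrow> 0"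
      using tendsto_mult_left[OF tendsto_mult_left[OF cutoff_ratio_powr_tendsto_0]] p01 by simp
  qed (auto simp: mean_hitting_time_nonneg)
  moreover have "(\<lambda>n. (\<gamma> + 1) powr p * (weight_sum p n / real n powr (1 - p))) \<longlonglongrightarrow> 0"
    using tendsto_mult_left[OF weight_sum_tendsto_0[OF p01]] by simp
  ultimately show ?thesis
    unfolding bias_bound_def add_divide_distrib using tendsto_add by fastforce
qed

section \<open>Concentration\<close>

definition deviation_term :: "real \<Rightarrow> nat \<Rightarrow> (nat \<Rightarrow> real) \<Rightarrow> nat \<Rightarrow> real" where
  "deviation_term p n e j = real j powr (3 - 3 * p / 2) * ((\<Sum>i=j+1..n. e i) - (2 / real j - 2 / real n))\<^sup>2"

definition deviation_sum :: "real \<Rightarrow> nat \<Rightarrow> (nat \<Rightarrow> real) \<Rightarrow> real" where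
  "deviation_sum p n e = real (cutoff n) * deviation_term p n e (cutoff n - 1)
     + (\<Sum>j=cutoff n..n-1. deviation_term p n e j)"

lemma deviation_sum_nonneg: "0 \<le> deviation_sum p n e"
  unfolding deviation_sum_def deviation_term_def by (intro add_nonneg_nonneg sum_nonneg mult_nonneg_nonneg) auto

lemma time_change_inv_diff_le:
  assumes \<gamma>: "\<gamma> > 0" and p: "p = 1 / (\<gamma> + 1)" and "0 \<le> a" "0 \<le> b" "1 \<le> j"
  shows "\<bar>time_change_inv \<gamma> a - time_change_inv \<gamma> b\<bar>
    \<le> (\<gamma> + 1) powr p * (j powr (- 3 * p / 2) + j powr (3 - 3 * p / 2) * (a - b)\<^sup>2)"
proof -
  have p01: "0 < p" "p < 1" using inverse_plus_one_bounds[OF \<gamma>] p by auto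
  have "\<bar>time_change_inv \<gamma> a - time_change_inv \<gamma> b\<bar> = \<bar>((\<gamma> + 1) * a) powr p - ((\<gamma> + 1) * b) powr p\<bar>"
    unfolding time_change_inv_def p ..
  also have "\<dots> \<le> \<bar>(\<gamma> + 1) * a - (\<gamma> + 1) * b\<bar> powr p"
    using assms p01 by (intro abs_powr_diff_le) auto
  also have "\<dots> = (\<gamma> + 1) powr p * \<bar>a - b\<bar> powr p"
    using \<gamma> by (simp add: abs_mult right_diff_distrib[symmetric] powr_mult)
  also have "\<dots> \<le> (\<gamma> + 1) powr p * (j powr (- 3 * p / 2) + j powr (3 - 3 * p / 2) * \<bar>a - b\<bar>\<^sup>2)"
    using powr_le_threshold_plus_square[of "\<bar>a - b\<bar>" p j] p01 assms by (intro mult_left_mono) auto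
  finally show ?thesis by simp
qed

lemma sum_hitting_times_approx:
  fixes e U :: "nat \<Rightarrow> real"
  assumes \<gamma>: "\<gamma> > 0" and p: "p = 1 / (\<gamma> + 1)"
    and n: "2 \<le> cutoff n" "cutoff n \<le> n"
    and pos: "\<forall>i\<in>{2..n}. 0 < e i"
    and U: "\<And>k. 1 \<le> k \<Longrightarrow> k \<le> n \<Longrightarrow> U k = time_change_inv \<gamma> (\<Sum>i=k+1..n. e i)"
  shows "\<bar>(\<Sum>k=cutoff n..n. real k * (U (k - 1) - U k)) - (\<Sum>j=cutoff n..n-1. mean_hitting_time \<gamma> n j)\<bar>
    \<le> real (cutoff n) * mean_hitting_time \<gamma> n (cutoff n - 1) + (\<gamma> + 1) powr p * (weight_sum p n + deviation_sum p n e)"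
proof -
  define m where "m = cutoff n"
  define q where "q = (\<gamma> + 1) powr p"
  define err where "err = (\<lambda>j. q * (real j powr (- 3 * p / 2) + deviation_term p n e j))"
  have U_approx: "\<bar>U j - mean_hitting_time \<gamma> n j\<bar> \<le> err j" if "1 \<le> j" "j \<le> n" for j
  proof -
    have "0 \<le> (\<Sum>i=j+1..n. e i)" using pos that by (intro sum_nonneg) (auto intro: less_imp_le)
    moreover have "0 \<le> 2 / real j - 2 / real n" using that by (auto intro!: divide_left_mono)
    ultimately show ?thesis
      using time_change_inv_diff_le[OF \<gamma> p, of _ _ "real j"] that
      unfolding U[OF that] err_def q_def deviation_term_def mean_hitting_time_def by simp
  qed
  have m: "1 \<le> m - 1" "m - 1 \<le> n" "m \<le> n" using n by (auto simp: m_def)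
  have "U n = 0" using U[of n] n by (simp add: time_change_inv_def)
  then have "(\<Sum>k=m..n. real k * (U (k - 1) - U k)) = real m * U (m - 1) + (\<Sum>j=m..n-1. U j)"
    using sum_mult_diff_by_parts[of m n U] m by simp
  then have "\<bar>(\<Sum>k=m..n. real k * (U (k - 1) - U k)) - (\<Sum>j=m..n-1. mean_hitting_time \<gamma> n j)\<bar>
      = \<bar>real m * U (m - 1) + (\<Sum>j=m..n-1. U j - mean_hitting_time \<gamma> n j)\<bar>"
    by (simp add: sum_subtractf add_diff_eq)
  also have "\<dots> \<le> \<bar>real m * U (m - 1)\<bar> + \<bar>\<Sum>j=m..n-1. U j - mean_hitting_time \<gamma> n j\<bar>"
    by (rule abs_triangle_ineq)
  also have "\<dots> \<le> real m * U (m - 1) + (\<Sum>j=m..n-1. \<bar>U j - mean_hitting_time \<gamma> n j\<bar>)"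
    using U[of "m - 1"] m time_change_inv_nonneg by (intro add_mono sum_abs) auto
  also have "\<dots> \<le> real m * (mean_hitting_time \<gamma> n (m - 1) + err (m - 1)) + (\<Sum>j=m..n-1. err j)"
    using U_approx m abs_le_D1[OF U_approx[OF m(1,2)]]
    by (intro add_mono mult_left_mono sum_mono) (auto simp: m_def)
  also have "\<dots> = real m * mean_hitting_time \<gamma> n (m - 1) + q * (weight_sum p n + deviation_sum p n e)"
    unfolding err_def weight_sum_def deviation_sum_def m_def[symmetric]
    by (simp add: sum.distrib sum_distrib_left algebra_simps)
  finally show ?thesis unfolding m_def q_def .
qed

lemma L_prime_error_le:
  assumes \<gamma>: "\<gamma> > 0" and p: "p = 1 / (\<gamma> + 1)" and n: "1 \<le> n" "2 \<le> cutoff n" "cutoff n \<le> n"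
    and pos: "\<forall>i\<in>{2..n}. 0 < e i" and valid: "\<forall>k\<in>{2..n}. v k \<in> block_pairs k"
    and path: "\<forall>t\<ge>0. \<Theta> t \<omega> = coal_path n e v t"
  shows "\<bar>L_prime \<gamma> n \<Theta> \<omega> / real n powr (1 - p) - c\<bar>
    \<le> bias_bound \<gamma> p n + \<bar>(\<Sum>j=cutoff n..n-1. mean_hitting_time \<gamma> n j) / real n powr (1 - p) - c\<bar>
      + (\<gamma> + 1) powr p * deviation_sum p n e / real n powr (1 - p)"
proof -
  define N where "N = real n powr (1 - p)"
  define S where "S = (\<Sum>j=cutoff n..n-1. mean_hitting_time \<gamma> n j)"
  have "0 < N" using n by (simp add: N_def)
  have U: "U_time \<gamma> \<Theta> k \<omega> = time_change_inv \<gamma> (\<Sum>i=k+1..n. e i)" if "1 \<le> k" "k \<le> n" for k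
    by (rule U_time_coal_path[where \<Theta>=\<Theta> and \<omega>=\<omega>, OF \<gamma> n(1) pos valid path that])
  have "L_prime \<gamma> n \<Theta> \<omega> = (\<Sum>k=cutoff n..n. real k * (U_time \<gamma> \<Theta> (k - 1) \<omega> - U_time \<gamma> \<Theta> k \<omega>))"
    unfolding L_prime_def cutoff_def Let_def ..
  then have "\<bar>L_prime \<gamma> n \<Theta> \<omega> - S\<bar>
      \<le> real (cutoff n) * mean_hitting_time \<gamma> n (cutoff n - 1) + (\<gamma> + 1) powr p * (weight_sum p n + deviation_sum p n e)"
    unfolding S_def using n
    by (simp only:) (rule sum_hitting_times_approx[OF \<gamma> p n(2,3) pos U])
  then have "\<bar>L_prime \<gamma> n \<Theta> \<omega> - S\<bar> / N
      \<le> (real (cutoff n) * mean_hitting_time \<gamma> n (cutoff n - 1) + (\<gamma> + 1) powr p * (weight_sum p n + deviation_sum p n e)) / N"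
    using \<open>0 < N\<close> by (rule divide_right_mono[OF _ less_imp_le])
  also have "\<dots> = bias_bound \<gamma> p n + (\<gamma> + 1) powr p * deviation_sum p n e / N"
    unfolding bias_bound_def N_def[symmetric] by (simp add: add_divide_distrib distrib_left)
  finally have "\<bar>L_prime \<gamma> n \<Theta> \<omega> - S\<bar> / N \<le> bias_bound \<gamma> p n + (\<gamma> + 1) powr p * deviation_sum p n e / N" .
  moreover have "\<bar>L_prime \<gamma> n \<Theta> \<omega> / N - c\<bar> \<le> \<bar>(L_prime \<gamma> n \<Theta> \<omega> - S) / N\<bar> + \<bar>S / N - c\<bar>"
    using abs_triangle_ineq[of "(L_prime \<gamma> n \<Theta> \<omega> - S) / N" "S / N - c"]
    by (simp add: diff_divide_distrib)
  moreover have "\<bar>(L_prime \<gamma> n \<Theta> \<omega> - S) / N\<bar> = \<bar>L_prime \<gamma> n \<Theta> \<omega> - S\<bar> / N"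
    using \<open>0 < N\<close> by simp
  ultimately show ?thesis unfolding N_def S_def by linarith
qed

lemma (in prob_space) deviation_term_expectation_le:
  fixes E :: "nat \<Rightarrow> 'a \<Rightarrow> real" and V :: "nat \<Rightarrow> 'a \<Rightarrow> nat \<times> nat"
  assumes dist: "\<forall>k\<in>{2..n}. distributed M lborel (E k) (\<lambda>x. ennreal (exponential_density (real (k choose 2)) x))"
    and ind: "indep_vars (\<lambda>_. borel \<Otimes>\<^sub>M count_space UNIV)
              (\<lambda>i \<omega>. case i of Inl k \<Rightarrow> (E k \<omega>, (0, 0)) | Inr k \<Rightarrow> (0, V k \<omega>))
              (Inl ` {2..n} \<union> Inr ` {2..n})"
    and j: "1 \<le> j" "j \<le> n"
  shows "integrable M (\<lambda>\<omega>. deviation_term p n (\<lambda>i. E i \<omega>) j)"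
    "expectation (\<lambda>\<omega>. deviation_term p n (\<lambda>i. E i \<omega>) j) \<le> 4 * real j powr (- 3 * p / 2)"
proof -
  note moment = tail_sum_second_moment[OF dist ind j]
  show "integrable M (\<lambda>\<omega>. deviation_term p n (\<lambda>i. E i \<omega>) j)"
    unfolding deviation_term_def using moment(1) by simp
  have "expectation (\<lambda>\<omega>. deviation_term p n (\<lambda>i. E i \<omega>) j)
      = real j powr (3 - 3 * p / 2) * expectation (\<lambda>\<omega>. ((\<Sum>i=j+1..n. E i \<omega>) - (2 / j - 2 / n))\<^sup>2)"
    unfolding deviation_term_def by simp
  also have "\<dots> \<le> real j powr (3 - 3 * p / 2) * (4 / real j ^ 3)"
    using moment(2) by (intro mult_left_mono) auto
  also have "real j ^ 3 = real j powr 3" using j by (simp add: powr_realpow)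
  also have "real j powr (3 - 3 * p / 2) * (4 / real j powr 3) = 4 * (real j powr (3 - 3 * p / 2) / real j powr 3)"
    by simp
  also have "real j powr (3 - 3 * p / 2) / real j powr 3 = real j powr ((3 - 3 * p / 2) - 3)"
    by (rule powr_diff[symmetric])
  also have "(3 - 3 * p / 2) - 3 = - 3 * p / 2" by simp
  finally show "expectation (\<lambda>\<omega>. deviation_term p n (\<lambda>i. E i \<omega>) j) \<le> 4 * real j powr (- 3 * p / 2)" .
qed

lemma (in prob_space) deviation_sum_expectation_le:
  fixes E :: "nat \<Rightarrow> 'a \<Rightarrow> real" and V :: "nat \<Rightarrow> 'a \<Rightarrow> nat \<times> nat"
  assumes dist: "\<forall>k\<in>{2..n}. distributed M lborel (E k) (\<lambda>x. ennreal (exponential_density (real (k choose 2)) x))"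
    and ind: "indep_vars (\<lambda>_. borel \<Otimes>\<^sub>M count_space UNIV)
              (\<lambda>i \<omega>. case i of Inl k \<Rightarrow> (E k \<omega>, (0, 0)) | Inr k \<Rightarrow> (0, V k \<omega>))
              (Inl ` {2..n} \<union> Inr ` {2..n})"
    and n: "2 \<le> cutoff n" "cutoff n \<le> n"
  shows "integrable M (\<lambda>\<omega>. deviation_sum p n (\<lambda>i. E i \<omega>))"
    "expectation (\<lambda>\<omega>. deviation_sum p n (\<lambda>i. E i \<omega>)) \<le> 4 * weight_sum p n"
proof -
  define m where "m = cutoff n"
  define D where "D = (\<lambda>j \<omega>. deviation_term p n (\<lambda>i. E i \<omega>) j)"
  have m: "1 \<le> m - 1" "m - 1 \<le> n" using n by (auto simp: m_def)
  have D_int: "integrable M (D j)" and D_exp: "expectation (D j) \<le> 4 * real j powr (- 3 * p / 2)"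
    if "1 \<le> j" "j \<le> n" for j
    using deviation_term_expectation_le[OF dist ind that, of p] unfolding D_def by auto
  have sum_int: "integrable M (\<lambda>\<omega>. \<Sum>j=m..n-1. D j \<omega>)"
    using n by (intro Bochner_Integration.integrable_sum D_int) (auto simp: m_def)
  have deviation_sum: "deviation_sum p n (\<lambda>i. E i \<omega>) = real m * D (m - 1) \<omega> + (\<Sum>j=m..n-1. D j \<omega>)" for \<omega>
    unfolding deviation_sum_def D_def m_def ..
  show "integrable M (\<lambda>\<omega>. deviation_sum p n (\<lambda>i. E i \<omega>))"
    unfolding deviation_sum using D_int[OF m] sum_int by simp
  have "expectation (\<lambda>\<omega>. deviation_sum p n (\<lambda>i. E i \<omega>))
      = real m * expectation (D (m - 1)) + (\<Sum>j=m..n-1. expectation (D j))"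
    unfolding deviation_sum using D_int[OF m] sum_int n
    by (subst Bochner_Integration.integral_add) (auto simp: m_def intro!: Bochner_Integration.integral_sum D_int)
  also have "\<dots> \<le> real m * (4 * real (m - 1) powr (- 3 * p / 2)) + (\<Sum>j=m..n-1. 4 * real j powr (- 3 * p / 2))"
    using D_exp[OF m] n by (intro add_mono mult_left_mono sum_mono D_exp) (auto simp: m_def)
  also have "\<dots> = 4 * weight_sum p n"
    unfolding weight_sum_def m_def[symmetric] by (simp add: sum_distrib_left algebra_simps)
  finally show "expectation (\<lambda>\<omega>. deviation_sum p n (\<lambda>i. E i \<omega>)) \<le> 4 * weight_sum p n" .
qed

lemma prob_L_prime_far_le:
  fixes M :: "'w measure" and \<Theta> :: "real \<Rightarrow> 'w \<Rightarrow> nat set set"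
  assumes M: "prob_space M" and \<gamma>: "\<gamma> > 0" and p: "p = 1 / (\<gamma> + 1)"
    and n: "1 \<le> n" "2 \<le> cutoff n" "cutoff n \<le> n"
    and coalescent: "kingman_coalescent M n \<Theta>" and \<epsilon>: "\<epsilon> > 0"
    and close: "bias_bound \<gamma> p n + \<bar>(\<Sum>j=cutoff n..n-1. mean_hitting_time \<gamma> n j) / real n powr (1 - p) - c\<bar> \<le> \<epsilon> / 2"
  shows "prob_space.prob M {\<omega> \<in> space M. \<bar>L_prime \<gamma> n \<Theta> \<omega> / real n powr (1 - p) - c\<bar> > \<epsilon>}
    \<le> 8 * (\<gamma> + 1) powr p * weight_sum p n / (\<epsilon> * real n powr (1 - p))"
proof -
  interpret prob_space M by (rule M)
  obtain E :: "nat \<Rightarrow> 'w \<Rightarrow> real" and V :: "nat \<Rightarrow> 'w \<Rightarrow> nat \<times> nat" where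
    dist: "\<forall>k\<in>{2..n}. distributed M lborel (E k) (\<lambda>x. ennreal (exponential_density (real (k choose 2)) x))"
    and choice: "\<forall>k\<in>{2..n}. V k \<in> measurable M (count_space UNIV) \<and>
              (\<forall>p\<in>block_pairs k. prob {\<omega> \<in> space M. V k \<omega> = p} = 1 / real (card (block_pairs k)))"
    and ind: "indep_vars (\<lambda>_. borel \<Otimes>\<^sub>M count_space UNIV)
              (\<lambda>i \<omega>. case i of Inl k \<Rightarrow> (E k \<omega>, (0, 0)) | Inr k \<Rightarrow> (0, V k \<omega>))
              (Inl ` {2..n} \<union> Inr ` {2..n})"
    and path: "\<forall>\<omega>\<in>space M. \<forall>t\<ge>0. \<Theta> t \<omega> = coal_path n (\<lambda>k. E k \<omega>) (\<lambda>k. V k \<omega>) t"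
    using coalescent unfolding kingman_coalescent_def by blast
  define N where "N = real n powr (1 - p)"
  define q where "q = (\<gamma> + 1) powr p"
  define W where "W = (\<lambda>\<omega>. deviation_sum p n (\<lambda>i. E i \<omega>))"
  define a where "a = \<epsilon> * N / (2 * q)"
  have "0 < N" "0 < q" "0 < a" using n \<gamma> \<epsilon> by (auto simp: N_def q_def a_def)
  note W_int = deviation_sum_expectation_le(1)[OF dist ind n(2,3), of p, folded W_def]
  then have [measurable]: "W \<in> borel_measurable M" by auto
  have "AE \<omega> in M. \<bar>L_prime \<gamma> n \<Theta> \<omega> / N - c\<bar> > \<epsilon> \<longrightarrow> a \<le> W \<omega>"
    using AE_holding_times_pos_choices_valid[OF dist choice]
  proof (rule AE_mp, intro AE_I2 impI)
    fix \<omega> assume \<omega>: "\<omega> \<in> space M" and valid: "\<forall>k\<in>{2..n}. 0 < E k \<omega> \<and> V k \<omega> \<in> block_pairs k"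
      and far: "\<bar>L_prime \<gamma> n \<Theta> \<omega> / N - c\<bar> > \<epsilon>"
    have "\<bar>L_prime \<gamma> n \<Theta> \<omega> / N - c\<bar> \<le> \<epsilon> / 2 + q * W \<omega> / N"
      using L_prime_error_le[OF \<gamma> p n, of "\<lambda>k. E k \<omega>" "\<lambda>k. V k \<omega>" \<Theta> \<omega> c] valid path \<omega> close
      unfolding N_def q_def W_def by fastforce
    then show "a \<le> W \<omega>"
      using far \<open>0 < N\<close> \<open>0 < q\<close> unfolding a_def by (simp add: field_simps)
  qed
  then have "prob {\<omega> \<in> space M. \<bar>L_prime \<gamma> n \<Theta> \<omega> / N - c\<bar> > \<epsilon>} \<le> prob {\<omega> \<in> space M. a \<le> W \<omega>}"
    by (intro finite_measure_mono_AE) auto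
  also have "\<dots> \<le> expectation W / a"
    using deviation_sum_nonneg W_int \<open>0 < a\<close> unfolding W_def
    by (intro integral_Markov_inequality_measure) auto
  also have "\<dots> \<le> 4 * weight_sum p n / a"
    using deviation_sum_expectation_le(2)[OF dist ind n(2,3), of p, folded W_def] \<open>0 < a\<close>
    by (intro divide_right_mono) auto
  also have "\<dots> = 8 * (\<gamma> + 1) powr p * weight_sum p n / (\<epsilon> * real n powr (1 - p))"
    unfolding a_def q_def N_def using \<epsilon> \<open>0 < N\<close> \<open>0 < q\<close> by (simp add: field_simps N_def q_def)
  finally show ?thesis unfolding N_def .
qed

lemma deterministic_error_tendsto_0:
  assumes \<gamma>: "\<gamma> > 0" and p: "p = 1 / (\<gamma> + 1)"
  shows "(\<lambda>n. bias_bound \<gamma> p n + \<bar>(\<Sum>j=cutoff n..n-1. mean_hitting_time \<gamma> n j) / real n powr (1 - p)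
     - (2 * (\<gamma> + 1)) powr p * (p * pi / sin (pi * p))\<bar>) \<longlonglongrightarrow> 0"
  using tendsto_add[OF bias_bound_tendsto_0[OF \<gamma> p]
      tendsto_rabs_zero[OF LIM_zero[OF mean_hitting_time_sum_tendsto[OF \<gamma> p]]]] by simp

lemma limit_constant_eq:
  assumes \<gamma>: "\<gamma> > 0" and p: "p = 1 / (\<gamma> + 1)" and \<alpha>: "\<alpha> = \<gamma> / (1 + \<gamma>)"
  shows "\<alpha> = 1 - p"
    "2 powr (1 - \<alpha>) * (1 - \<alpha>) powr \<alpha> * pi / sin (pi * \<alpha>) = (2 * (\<gamma> + 1)) powr p * (p * pi / sin (pi * p))"
proof -
  show \<alpha>_eq: "\<alpha> = 1 - p" unfolding \<alpha> p using \<gamma> by (simp add: field_simps)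
  have "0 < p" using inverse_plus_one_bounds[OF \<gamma>] p by simp
  have "\<gamma> + 1 = 1 / p" unfolding p using \<gamma> by simp
  then have "(2 * (\<gamma> + 1)) powr p = 2 powr p * (1 / p) powr p"
    by (simp only:) (rule powr_mult)
  also have "(1 / p) powr p = p powr (- p)" using \<open>0 < p\<close> by (simp add: powr_minus_divide powr_divide)
  finally have "(2 * (\<gamma> + 1)) powr p * p = 2 powr p * p powr (1 - p)"
    using \<open>0 < p\<close> by (simp add: powr_diff powr_minus_divide field_simps)
  moreover have "sin (pi * (1 - p)) = sin (pi * p)" by (simp add: right_diff_distrib sin_diff)
  ultimately show "2 powr (1 - \<alpha>) * (1 - \<alpha>) powr \<alpha> * pi / sin (pi * \<alpha>) = (2 * (\<gamma> + 1)) powr p * (p * pi / sin (pi * p))"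
    unfolding \<alpha>_eq by (simp add: field_simps)
qed

theorem lemma18:
  fixes M :: "'w measure" and \<gamma> \<alpha> :: real
    and \<Theta> :: "nat \<Rightarrow> real \<Rightarrow> 'w \<Rightarrow> nat set set"
  assumes "prob_space M"
    and "\<gamma> > 0"
    and "\<alpha> = \<gamma> / (1 + \<gamma>)"
    and "\<And>n. n \<ge> 1 \<Longrightarrow> kingman_coalescent M n (\<Theta> n)"
  shows "\<forall>\<epsilon>>0. ((\<lambda>n. prob_space.prob M
            {\<omega> \<in> space M. \<bar>L_prime \<gamma> n (\<Theta> n) \<omega> / real n powr \<alpha>
               - 2 powr (1 - \<alpha>) * (1 - \<alpha>) powr \<alpha> * pi / sin (pi * \<alpha>)\<bar> > \<epsilon>})
          \<longlongrightarrow> 0) sequentially"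
proof (intro allI impI)
  fix \<epsilon> :: real assume \<epsilon>: "\<epsilon> > 0"
  define p where "p = 1 / (\<gamma> + 1)"
  define c where "c = (2 * (\<gamma> + 1)) powr p * (p * pi / sin (pi * p))"
  note \<alpha> = limit_constant_eq[OF assms(2) p_def assms(3), folded c_def]
  have p01: "0 < p" "p < 1" using inverse_plus_one_bounds[OF assms(2)] p_def by auto
  have "eventually (\<lambda>n. bias_bound \<gamma> p n
      + \<bar>(\<Sum>j=cutoff n..n-1. mean_hitting_time \<gamma> n j) / real n powr (1 - p) - c\<bar> < \<epsilon> / 2) sequentially"
    using deterministic_error_tendsto_0[OF assms(2) p_def, folded c_def] \<epsilon> by (intro order_tendstoD(2)) auto
  then have close: "eventually (\<lambda>n. bias_bound \<gamma> p n
      + \<bar>(\<Sum>j=cutoff n..n-1. mean_hitting_time \<gamma> n j) / real n powr (1 - p) - c\<bar> \<le> \<epsilon> / 2) sequentially"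
    by eventually_elim simp
  have "(\<lambda>n. prob_space.prob M {\<omega> \<in> space M. \<bar>L_prime \<gamma> n (\<Theta> n) \<omega> / real n powr (1 - p) - c\<bar> > \<epsilon>}) \<longlonglongrightarrow> 0"
  proof (rule real_tendsto_sandwich[where f="\<lambda>_. 0"])
    show "\<forall>\<^sub>F n in sequentially. prob_space.prob M {\<omega> \<in> space M. \<bar>L_prime \<gamma> n (\<Theta> n) \<omega> / real n powr (1 - p) - c\<bar> > \<epsilon>}
        \<le> 8 * (\<gamma> + 1) powr p / \<epsilon> * (weight_sum p n / real n powr (1 - p))"
      using close eventually_cutoff_le
      by eventually_elim (use prob_L_prime_far_le[OF assms(1,2) p_def _ _ _ assms(4) \<epsilon>] in auto)
    show "(\<lambda>n. 8 * (\<gamma> + 1) powr p / \<epsilon> * (weight_sum p n / real n powr (1 - p))) \<longlonglongrightarrow> 0"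
      using tendsto_mult_left[OF weight_sum_tendsto_0[OF p01], of "8 * (\<gamma> + 1) powr p / \<epsilon>"] by simp
  qed (auto intro: measure_nonneg)
  then show "((\<lambda>n. prob_space.prob M
            {\<omega> \<in> space M. \<bar>L_prime \<gamma> n (\<Theta> n) \<omega> / real n powr \<alpha>
               - 2 powr (1 - \<alpha>) * (1 - \<alpha>) powr \<alpha> * pi / sin (pi * \<alpha>)\<bar> > \<epsilon>}) \<longlongrightarrow> 0) sequentially"
    unfolding \<alpha>(2) unfolding \<alpha>(1) .
qed
end
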